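(* Let $K\subset L$ be a finite extension of non-archimedean local fields with rings of integers $\mathcal{O}_K$ and $\mathcal{O}_L$, let $\pi$ be a uniformizer of $K$ and $r\in\mathbb{N}$. (i) If $T\colon\mathcal{O}_K^n\to\mathcal{O}_K^n$ is an injective $\mathcal{O}_K$-linear map, then $$|\ker T\otimes(\mathcal{O}_L/\pi^r\mathcal{O}_L)|=|\mathrm{cok}\,T\otimes(\mathcal{O}_L/\pi^r\mathcal{O}_L)|=|\ker T\otimes(\mathcal{O}_K/\pi^r\mathcal{O}_K)|^{[L:K]}=|\mathrm{cok}\,T\otimes(\mathcal{O}_K/\pi^r\mathcal{O}_K)|^{[L:K]}.$$ (ii) If $U\colon\mathcal{O}_L^n\to\mathcal{O}_L^n$ is an injective $\mathcal{O}_L$-linear map and $\Lambda=\{x\in\mathcal{O}_K^n: x\otimes1\in\mathrm{im}\,U\}$, then $$|\ker U\otimes(\mathcal{O}_L/\pi^r\mathcal{O}_L)|=|\mathrm{cok}\,U\otimes(\mathcal{O}_L/\pi^r\mathcal{O}_L)|\le|\ker(\Lambda\otimes(\mathcal{O}_K/\pi^r\mathcal{O}_K)\to(\mathcal{O}_K/\pi^r\mathcal{O}_K)^n)|^{[L:K]}=|\mathrm{cok}(\Lambda\otimes(\mathcal{O}_K/\pi^r\mathcal{O}_K)\to(\mathcal{O}_K/\pi^r\mathcal{O}_K)^n)|^{[L:K]},$$ where the last maps are induced by the inclusion $\Lambda\hookrightarrow\mathcal{O}_K^n$.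
   Context: $\mathrm{cok}$ denotes cokernel; tensor products of a map $T$ with a quotient ring mean the induced map on the corresponding free modules. *)

theory Defs
  imports Complex_Main
begin

definition abs_value :: "('a::field \<Rightarrow> real) \<Rightarrow> bool" where
  "abs_value av \<longleftrightarrow>
     (\<forall>x. av x \<ge> 0) \<and> (\<forall>x. av x = 0 \<longleftrightarrow> x = 0) \<and>
     (\<forall>x y. av (x * y) = av x * av y)"

definition nonarch_abs :: "('a::field \<Rightarrow> real) \<Rightarrow> bool" where
  "nonarch_abs av \<longleftrightarrow> abs_value av \<and> (\<forall>x y. av (x + y) \<le> max (av x) (av y))"

definition discrete_abs :: "('a::field \<Rightarrow> real) \<Rightarrow> bool" where
  "discrete_abs av \<longleftrightarrow> (\<exists>c. 0 < c \<and> c < 1 \<and> av ` (UNIV - {0}) = range (\<lambda>k::int. c powi k))"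

definition complete_abs :: "('a::field \<Rightarrow> real) \<Rightarrow> bool" where
  "complete_abs av \<longleftrightarrow>
     (\<forall>X::nat \<Rightarrow> 'a. (\<forall>e>0. \<exists>N. \<forall>m\<ge>N. \<forall>n\<ge>N. av (X m - X n) < e) \<longrightarrow>
        (\<exists>l. \<forall>e>0. \<exists>N. \<forall>n\<ge>N. av (X n - l) < e))"

definition ints :: "('a::field \<Rightarrow> real) \<Rightarrow> 'a set" where
  "ints av = {x. av x \<le> 1}"

definition max_ideal :: "('a::field \<Rightarrow> real) \<Rightarrow> 'a set" where
  "max_ideal av = {x. av x < 1}"

definition finite_residue_field :: "('a::field \<Rightarrow> real) \<Rightarrow> bool" where
  "finite_residue_field av \<longleftrightarrow>
     finite (ints av // {(x, y). x \<in> ints av \<and> y \<in> ints av \<and> x - y \<in> max_ideal av})"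

definition nonarch_local_field :: "('a::field \<Rightarrow> real) \<Rightarrow> bool" where
  "nonarch_local_field av \<longleftrightarrow>
     nonarch_abs av \<and> discrete_abs av \<and> complete_abs av \<and> finite_residue_field av"

definition uniformizer :: "('a::field \<Rightarrow> real) \<Rightarrow> 'a \<Rightarrow> bool" where
  "uniformizer av p \<longleftrightarrow> p \<in> ints av \<and> max_ideal av = {p * y | y. y \<in> ints av}"

definition field_emb :: "('k::field \<Rightarrow> 'l::field) \<Rightarrow> bool" where
  "field_emb f \<longleftrightarrow> f 1 = 1 \<and> (\<forall>x y. f (x + y) = f x + f y) \<and> (\<forall>x y. f (x * y) = f x * f y)"

definition ext_scale :: "('k::field \<Rightarrow> 'l::field) \<Rightarrow> 'k \<Rightarrow> 'l \<Rightarrow> 'l" where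
  "ext_scale f a x = f a * x"

definition finite_ext :: "('k::field \<Rightarrow> 'l::field) \<Rightarrow> bool" where
  "finite_ext f \<longleftrightarrow> field_emb f \<and> (\<exists>B. finite B \<and> module.span (ext_scale f) B = UNIV)"

definition ext_degree :: "('k::field \<Rightarrow> 'l::field) \<Rightarrow> nat" where
  "ext_degree f = vector_space.dim (ext_scale f) (UNIV :: 'l set)"

text \<open>Finite extension of non-archimedean local fields \<open>K \<subseteq> L\<close> (with absolute values
  \<open>avK\<close>, \<open>avL\<close>): the absolute value of \<open>L\<close> restricts (up to equivalence) to that of \<open>K\<close>.\<close>
definition local_field_ext ::
    "('k::field \<Rightarrow> real) \<Rightarrow> ('l::field \<Rightarrow> real) \<Rightarrow> ('k \<Rightarrow> 'l) \<Rightarrow> bool" where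
  "local_field_ext avK avL f \<longleftrightarrow>
     nonarch_local_field avK \<and> nonarch_local_field avL \<and> finite_ext f \<and>
     (\<exists>s>0. \<forall>a. avL (f a) = avK a powr s)"

definition vecs :: "'a set \<Rightarrow> ('n::finite \<Rightarrow> 'a) set" where
  "vecs R = {x. \<forall>i. x i \<in> R}"

definition mat_vec :: "('n::finite \<Rightarrow> 'n \<Rightarrow> 'a::comm_ring_1) \<Rightarrow> ('n \<Rightarrow> 'a) \<Rightarrow> ('n \<Rightarrow> 'a)" where
  "mat_vec A x = (\<lambda>i. \<Sum>j\<in>UNIV. A i j * x j)"

definition smul_set :: "'a::comm_ring_1 \<Rightarrow> ('n \<Rightarrow> 'a) set \<Rightarrow> ('n \<Rightarrow> 'a) set" where
  "smul_set t M = {(\<lambda>i. t * m i) | m. m \<in> M}"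

definition sum_set :: "('n \<Rightarrow> 'a::comm_ring_1) set \<Rightarrow> ('n \<Rightarrow> 'a) set \<Rightarrow> ('n \<Rightarrow> 'a) set" where
  "sum_set M N = {(\<lambda>i. m i + k i) | m k. m \<in> M \<and> k \<in> N}"

definition quot :: "('n \<Rightarrow> 'a::comm_ring_1) set \<Rightarrow> ('n \<Rightarrow> 'a) set \<Rightarrow> ('n \<Rightarrow> 'a) set set" where
  "quot S N = S // {(x, y). x \<in> S \<and> y \<in> S \<and> (\<lambda>i. x i - y i) \<in> N}"

text \<open>For a matrix \<open>A\<close> over a ring of integers \<open>O\<close> (acting on \<open>O^n\<close>) and \<open>t\<close> in \<open>O\<close>:
  \<open>ker (A \<otimes> O/tO) = {x \<in> O^n. A x \<in> t O^n} / t O^n\<close> and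
  \<open>cok (A \<otimes> O/tO) = O^n / (A O^n + t O^n)\<close>.\<close>
definition ker_mod :: "'a::comm_ring_1 set \<Rightarrow> ('n::finite \<Rightarrow> 'n \<Rightarrow> 'a) \<Rightarrow> 'a \<Rightarrow> ('n \<Rightarrow> 'a) set set" where
  "ker_mod R A t = quot {x \<in> vecs R. mat_vec A x \<in> smul_set t (vecs R)} (smul_set t (vecs R))"

definition cok_mod :: "'a::comm_ring_1 set \<Rightarrow> ('n::finite \<Rightarrow> 'n \<Rightarrow> 'a) \<Rightarrow> 'a \<Rightarrow> ('n \<Rightarrow> 'a) set set" where
  "cok_mod R A t = quot (vecs R) (sum_set (mat_vec A ` vecs R) (smul_set t (vecs R)))"

text \<open>For a submodule \<open>\<Lambda> \<subseteq> O^n\<close>, the map \<open>\<Lambda> \<otimes> O/tO \<rightarrow> (O/tO)^n\<close> induced by inclusion: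
  \<open>\<Lambda> \<otimes> O/tO = \<Lambda>/t\<Lambda>\<close>, so its kernel is \<open>(\<Lambda> \<inter> t O^n) / t\<Lambda>\<close> and its cokernel
  is \<open>O^n / (\<Lambda> + t O^n)\<close>.\<close>
definition ker_incl_mod :: "'a::comm_ring_1 set \<Rightarrow> ('n::finite \<Rightarrow> 'a) set \<Rightarrow> 'a \<Rightarrow> ('n \<Rightarrow> 'a) set set" where
  "ker_incl_mod R Lam t = quot (Lam \<inter> smul_set t (vecs R)) (smul_set t Lam)"

definition cok_incl_mod :: "'a::comm_ring_1 set \<Rightarrow> ('n::finite \<Rightarrow> 'a) set \<Rightarrow> 'a \<Rightarrow> ('n \<Rightarrow> 'a) set set" where
  "cok_incl_mod R Lam t = quot (vecs R) (sum_set Lam (smul_set t (vecs R)))"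

end

theory Submission
  imports Defs "HOL-Library.Function_Algebras" "HOL-Library.FuncSet"
begin

(*
  Let u_1, ..., u_f in O_L lift a basis of the residue field extension of L/K and let pi_L be a
  uniformizer of L, so that |pi| = |pi_L|^e. An O_K-combination of the u_i has the absolute value of
  its largest coefficient, and the layers (sum_i a_ij u_i) pi_L^j for j < e have absolute values in
  distinct classes modulo |K^*|. Hence the e f elements u_i pi_L^j are linearly independent; since
  they approximate every element of O_L modulo pi, completeness of K makes them an O_K-basis of O_L.
  So [L:K] = e f, and O_L^n is isomorphic to (O_K^n)^[L:K] compatibly with matrices over O_K and
  with multiplication by pi. Therefore O_L^n / (T O_L^n + pi^r O_L^n) is the [L:K]-th power of the
  corresponding quotient of O_K^n, while U O_L^n + pi^r O_L^n contains the image of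
  (Lambda + pi^r O_K^n)^[L:K], which gives the inequality in (ii). The remaining equalities hold
  because kernel and cokernel of a homomorphism between finite groups of equal order have the same
  size.
*)

section \<open>Cosets of additive subgroups\<close>

definition add_subgroup :: "'g::ab_group_add set \<Rightarrow> bool" where
  "add_subgroup G \<longleftrightarrow> 0 \<in> G \<and> (\<forall>x\<in>G. \<forall>y\<in>G. x - y \<in> G)"

definition coset :: "'g::ab_group_add set \<Rightarrow> 'g set \<Rightarrow> 'g \<Rightarrow> 'g set" where
  "coset G N x = {y \<in> G. x - y \<in> N}"

definition cosets :: "'g::ab_group_add set \<Rightarrow> 'g set \<Rightarrow> 'g set set" where
  "cosets G N = G // {(x, y). x \<in> G \<and> y \<in> G \<and> x - y \<in> N}"

lemma add_subgroup_zero: "add_subgroup G \<Longrightarrow> 0 \<in> G"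
  by (simp add: add_subgroup_def)

lemma add_subgroup_diff: "add_subgroup G \<Longrightarrow> x \<in> G \<Longrightarrow> y \<in> G \<Longrightarrow> x - y \<in> G"
  by (simp add: add_subgroup_def)

lemma add_subgroup_minus: "add_subgroup G \<Longrightarrow> x \<in> G \<Longrightarrow> - x \<in> G"
  using add_subgroup_diff[of G 0 x] add_subgroup_zero[of G] by simp

lemma add_subgroup_add: "add_subgroup G \<Longrightarrow> x \<in> G \<Longrightarrow> y \<in> G \<Longrightarrow> x + y \<in> G"
  using add_subgroup_diff[of G x "- y"] add_subgroup_minus[of G y] by simp

lemma add_subgroup_sum: "add_subgroup G \<Longrightarrow> (\<And>i. i \<in> I \<Longrightarrow> h i \<in> G) \<Longrightarrow> sum h I \<in> G"
  by (induction I rule: infinite_finite_induct) (auto intro: add_subgroup_zero add_subgroup_add)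

lemma additive_zero:
  fixes \<phi> :: "'a::ab_group_add \<Rightarrow> 'b::ab_group_add"
  assumes "add_subgroup G" "\<And>x y. x \<in> G \<Longrightarrow> y \<in> G \<Longrightarrow> \<phi> (x - y) = \<phi> x - \<phi> y"
  shows "\<phi> 0 = 0"
  using assms(2)[of 0 0] add_subgroup_zero[OF assms(1)] by simp

lemma add_subgroup_image:
  fixes \<phi> :: "'a::ab_group_add \<Rightarrow> 'b::ab_group_add"
  assumes G: "add_subgroup G" and hom: "\<And>x y. x \<in> G \<Longrightarrow> y \<in> G \<Longrightarrow> \<phi> (x - y) = \<phi> x - \<phi> y"
  shows "add_subgroup (\<phi> ` G)"
  unfolding add_subgroup_def
proof (intro conjI ballI)
  show "0 \<in> \<phi> ` G"
    using additive_zero[OF G hom] add_subgroup_zero[OF G] by (metis image_eqI)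
  fix x y assume "x \<in> \<phi> ` G" "y \<in> \<phi> ` G"
  then obtain a b where "a \<in> G" "b \<in> G" "x = \<phi> a" "y = \<phi> b" by blast
  then show "x - y \<in> \<phi> ` G" using hom add_subgroup_diff[OF G] by (metis image_eqI)
qed

lemma add_subgroup_preimage:
  fixes \<phi> :: "'a::ab_group_add \<Rightarrow> 'b::ab_group_add"
  assumes G: "add_subgroup G" and T: "add_subgroup T"
    and hom: "\<And>x y. x \<in> G \<Longrightarrow> y \<in> G \<Longrightarrow> \<phi> (x - y) = \<phi> x - \<phi> y"
  shows "add_subgroup {x \<in> G. \<phi> x \<in> T}"
  unfolding add_subgroup_def
proof (intro conjI ballI)
  show "0 \<in> {x \<in> G. \<phi> x \<in> T}"
    using additive_zero[OF G hom] add_subgroup_zero[OF G] add_subgroup_zero[OF T] by simp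
  fix x y assume "x \<in> {x \<in> G. \<phi> x \<in> T}" "y \<in> {x \<in> G. \<phi> x \<in> T}"
  then show "x - y \<in> {x \<in> G. \<phi> x \<in> T}"
    using hom add_subgroup_diff[OF G] add_subgroup_diff[OF T] by simp
qed

lemma add_subgroup_sums:
  assumes M: "add_subgroup M" and N: "add_subgroup N"
  shows "add_subgroup {m + k |m k. m \<in> M \<and> k \<in> N}"
  unfolding add_subgroup_def
proof (intro conjI ballI)
  show "0 \<in> {m + k |m k. m \<in> M \<and> k \<in> N}"
    using add_subgroup_zero[OF M] add_subgroup_zero[OF N] by force
  fix x y assume "x \<in> {m + k |m k. m \<in> M \<and> k \<in> N}" "y \<in> {m + k |m k. m \<in> M \<and> k \<in> N}"
  then obtain m1 k1 m2 k2
    where mk: "x = m1 + k1" "y = m2 + k2" "m1 \<in> M" "m2 \<in> M" "k1 \<in> N" "k2 \<in> N"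
    by blast
  then have "x - y = (m1 - m2) + (k1 - k2)" by (simp add: algebra_simps)
  then show "x - y \<in> {m + k |m k. m \<in> M \<and> k \<in> N}"
    using mk add_subgroup_diff[OF M] add_subgroup_diff[OF N] by blast
qed

lemma sums_subset:
  assumes "add_subgroup G" "M \<subseteq> G" "N \<subseteq> G"
  shows "{m + k |m k. m \<in> M \<and> k \<in> N} \<subseteq> G"
  using assms add_subgroup_add by blast

lemma subset_sums: "(0::'a::ab_group_add) \<in> M \<Longrightarrow> N \<subseteq> {m + k |m k. m \<in> M \<and> k \<in> N}"
  by force

lemma cosets_eq_image: "cosets G N = coset G N ` G"
  unfolding cosets_def quotient_def coset_def by auto

lemma coset_self: "add_subgroup N \<Longrightarrow> x \<in> G \<Longrightarrow> x \<in> coset G N x"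
  by (simp add: coset_def add_subgroup_zero)

lemma coset_eq_iff:
  assumes N: "add_subgroup N" and x: "x \<in> G" and y: "y \<in> G"
  shows "coset G N x = coset G N y \<longleftrightarrow> x - y \<in> N"
proof
  assume "coset G N x = coset G N y"
  then have "y \<in> coset G N x" using coset_self[OF N y] by simp
  then show "x - y \<in> N" unfolding coset_def by simp
next
  assume xy: "x - y \<in> N"
  have "x - z \<in> N \<longleftrightarrow> y - z \<in> N" for z
  proof
    assume "x - z \<in> N"
    then have "(x - z) - (x - y) \<in> N" using xy add_subgroup_diff[OF N] by blast
    then show "y - z \<in> N" by (simp add: algebra_simps)
  next
    assume "y - z \<in> N"
    then have "(y - z) + (x - y) \<in> N" using xy add_subgroup_add[OF N] by blast
    then show "x - z \<in> N" by (simp add: algebra_simps)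
  qed
  then show "coset G N x = coset G N y" by (auto simp: coset_def)
qed

lemma card_cosets_pos: "add_subgroup G \<Longrightarrow> finite (cosets G N) \<Longrightarrow> 0 < card (cosets G N)"
  using add_subgroup_zero[of G] by (auto simp: cosets_eq_image card_gt_0_iff)

lemma card_cosets_eq_card_image:
  assumes fibres: "\<And>x y. x \<in> G \<Longrightarrow> y \<in> G \<Longrightarrow> \<psi> x = \<psi> y \<longleftrightarrow> x - y \<in> N"
  shows "card (cosets G N) = card (\<psi> ` G) \<and> (finite (cosets G N) \<longleftrightarrow> finite (\<psi> ` G))"
proof -
  have coset_fibre: "coset G N x = {z \<in> G. \<psi> z = \<psi> x}" if x: "x \<in> G" for x
  proof -
    have "x - z \<in> N \<longleftrightarrow> \<psi> z = \<psi> x" if "z \<in> G" for z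
      using fibres[OF x that] by auto
    then show ?thesis by (auto simp: coset_def)
  qed
  define F where "F C = \<psi> (SOME x. x \<in> C)" for C
  have F_coset: "F (coset G N x) = \<psi> x" if x: "x \<in> G" for x
  proof -
    have "x \<in> coset G N x" using coset_fibre[OF x] x by auto
    then have "(SOME y. y \<in> coset G N x) \<in> coset G N x" by (rule someI)
    then show ?thesis using coset_fibre[OF x] by (simp add: F_def)
  qed
  have "F ` cosets G N = \<psi> ` G"
    unfolding cosets_eq_image image_image using F_coset by (auto simp: image_iff)
  moreover have "inj_on F (cosets G N)"
    unfolding cosets_eq_image
  proof (rule inj_onI, clarify)
    fix x y assume xy: "x \<in> G" "y \<in> G" "F (coset G N x) = F (coset G N y)"
    then have "\<psi> x = \<psi> y" by (simp add: F_coset)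
    then show "coset G N x = coset G N y" using coset_fibre xy by simp
  qed
  ultimately show ?thesis using card_image finite_image_iff by metis
qed

lemma card_cosets_iso:
  assumes G: "add_subgroup G" and M: "add_subgroup M"
    and into: "\<And>x. x \<in> G \<Longrightarrow> \<phi> x \<in> H"
    and hom: "\<And>x y. x \<in> G \<Longrightarrow> y \<in> G \<Longrightarrow> \<phi> (x - y) = \<phi> x - \<phi> y"
    and onto: "\<And>h. h \<in> H \<Longrightarrow> \<exists>g\<in>G. h - \<phi> g \<in> M"
    and ker: "\<And>x. x \<in> G \<Longrightarrow> \<phi> x \<in> M \<longleftrightarrow> x \<in> N"
  shows "card (cosets G N) = card (cosets H M) \<and> (finite (cosets G N) \<longleftrightarrow> finite (cosets H M))"
proof -
  define \<psi> where "\<psi> x = coset H M (\<phi> x)" for x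
  have "\<psi> x = \<psi> y \<longleftrightarrow> x - y \<in> N" if "x \<in> G" "y \<in> G" for x y
    using coset_eq_iff[OF M into[OF that(1)] into[OF that(2)]] hom[OF that] ker[of "x - y"]
      add_subgroup_diff[OF G that] by (simp add: \<psi>_def)
  then have "card (cosets G N) = card (\<psi> ` G) \<and> (finite (cosets G N) \<longleftrightarrow> finite (\<psi> ` G))"
    by (rule card_cosets_eq_card_image)
  moreover have "\<psi> ` G = cosets H M"
  proof -
    have "coset H M h \<in> \<psi> ` G" if h: "h \<in> H" for h
    proof -
      obtain g where g: "g \<in> G" "h - \<phi> g \<in> M" using onto[OF h] by blast
      then have "coset H M h = \<psi> g"
        using coset_eq_iff[OF M h into[OF g(1)]] by (simp add: \<psi>_def)
      then show ?thesis using g(1) by blast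
    qed
    then show ?thesis using into by (auto simp: \<psi>_def cosets_eq_image)
  qed
  ultimately show ?thesis by simp
qed

lemma translate_coset:
  assumes N: "add_subgroup N" "N \<subseteq> M" and M: "add_subgroup M" "M \<subseteq> G" and G: "add_subgroup G"
    and g: "g \<in> G" and m: "m \<in> M"
  shows "(\<lambda>y. y + g) ` coset M N m = coset G N (m + g)"
proof
  show "(\<lambda>y. y + g) ` coset M N m \<subseteq> coset G N (m + g)"
    using M(2) g add_subgroup_add[OF G] by (auto simp: coset_def)
  show "coset G N (m + g) \<subseteq> (\<lambda>y. y + g) ` coset M N m"
  proof
    fix z assume z: "z \<in> coset G N (m + g)"
    then have n: "m + g - z \<in> N" by (simp add: coset_def)
    then have "m - (m + g - z) \<in> M" using N(2) add_subgroup_diff[OF M(1) m] by blast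
    then have "z - g \<in> M" by (simp add: algebra_simps)
    moreover have "m - (z - g) \<in> N" using n by (simp add: algebra_simps)
    ultimately show "z \<in> (\<lambda>y. y + g) ` coset M N m"
      by (auto simp: coset_def image_iff intro!: bexI[of _ "z - g"])
  qed
qed

lemma cosets_within_coset:
  assumes N: "add_subgroup N" "N \<subseteq> M" and M: "add_subgroup M" "M \<subseteq> G" and G: "add_subgroup G"
    and g: "g \<in> G"
  shows "{C \<in> cosets G N. C \<subseteq> coset G M g} = (\<lambda>C. (\<lambda>y. y + g) ` C) ` cosets M N"
proof
  show "{C \<in> cosets G N. C \<subseteq> coset G M g} \<subseteq> (\<lambda>C. (\<lambda>y. y + g) ` C) ` cosets M N"
  proof clarify
    fix C assume C: "C \<in> cosets G N" "C \<subseteq> coset G M g"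
    then obtain x where x: "x \<in> G" "C = coset G N x" by (auto simp: cosets_eq_image)
    then have "g - x \<in> M" using C coset_self[OF N(1) x(1)] by (auto simp: coset_def)
    then have xg: "x - g \<in> M" using add_subgroup_minus[OF M(1)] by fastforce
    have "C = (\<lambda>y. y + g) ` coset M N (x - g)"
      using translate_coset[OF N M G g xg] x by simp
    then show "C \<in> (\<lambda>C. (\<lambda>y. y + g) ` C) ` cosets M N" using xg by (auto simp: cosets_eq_image)
  qed
  show "(\<lambda>C. (\<lambda>y. y + g) ` C) ` cosets M N \<subseteq> {C \<in> cosets G N. C \<subseteq> coset G M g}"
  proof clarify
    fix C assume "C \<in> cosets M N"
    then obtain m where m: "m \<in> M" "C = coset M N m" by (auto simp: cosets_eq_image)
    have shift: "(\<lambda>y. y + g) ` C = coset G N (m + g)"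
      using translate_coset[OF N M G g m(1)] m by simp
    have "m + g \<in> G" using m M(2) g add_subgroup_add[OF G] by auto
    moreover have "coset G N (m + g) \<subseteq> coset G M g"
    proof
      fix z assume "z \<in> coset G N (m + g)"
      then have "z \<in> G" "m + g - z \<in> M" using N(2) by (auto simp: coset_def)
      then have "z \<in> G" "(m + g - z) - m \<in> M" using add_subgroup_diff[OF M(1) _ m(1)] by blast+
      then show "z \<in> coset G M g" by (simp add: coset_def algebra_simps)
    qed
    ultimately show "(\<lambda>y. y + g) ` C \<in> cosets G N \<and> (\<lambda>y. y + g) ` C \<subseteq> coset G M g"
      using shift by (auto simp: cosets_eq_image)
  qed
qed

lemma card_cosets_within_coset:
  assumes "add_subgroup N" "N \<subseteq> M" "add_subgroup M" "M \<subseteq> G" "add_subgroup G" "g \<in> G"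
  shows "card {C \<in> cosets G N. C \<subseteq> coset G M g} = card (cosets M N)
    \<and> (finite {C \<in> cosets G N. C \<subseteq> coset G M g} \<longleftrightarrow> finite (cosets M N))"
proof -
  have "inj (\<lambda>y::'a. y + g)" by (rule injI) simp
  then have "inj_on (\<lambda>C. (\<lambda>y. y + g) ` C) (cosets M N)"
    by (simp add: inj_on_def inj_image_eq_iff)
  then show ?thesis
    unfolding cosets_within_coset[OF assms] using card_image finite_image_iff by blast
qed

lemma card_cosets_tower:
  assumes N: "add_subgroup N" "N \<subseteq> M" and M: "add_subgroup M" "M \<subseteq> G" and G: "add_subgroup G"
    and fin: "finite (cosets G M)" "finite (cosets M N)"
  shows "finite (cosets G N) \<and> card (cosets G N) = card (cosets G M) * card (cosets M N)"
proof -
  let ?F = "\<lambda>B. {C \<in> cosets G N. C \<subseteq> B}"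
  have fibre: "finite (?F B) \<and> card (?F B) = card (cosets M N)" if B: "B \<in> cosets G M" for B
  proof -
    obtain g where "g \<in> G" "B = coset G M g" using B unfolding cosets_eq_image by blast
    then show ?thesis using card_cosets_within_coset[OF N M G] fin(2) by simp
  qed
  have disjoint: "?F B1 \<inter> ?F B2 = {}"
    if B: "B1 \<in> cosets G M" "B2 \<in> cosets G M" "B1 \<noteq> B2" for B1 B2
  proof (rule ccontr)
    assume "?F B1 \<inter> ?F B2 \<noteq> {}"
    then obtain x where x: "x \<in> G" "coset G N x \<subseteq> B1" "coset G N x \<subseteq> B2"
      by (auto simp: cosets_eq_image)
    obtain y1 y2 where y: "y1 \<in> G" "B1 = coset G M y1" "y2 \<in> G" "B2 = coset G M y2"
      using B by (auto simp: cosets_eq_image)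
    have "y1 - x \<in> M" "y2 - x \<in> M" using x y coset_self[OF N(1) x(1)] by (auto simp: coset_def)
    then have "(y1 - x) - (y2 - x) \<in> M" using add_subgroup_diff[OF M(1)] by blast
    then show False using B y coset_eq_iff[OF M(1) y(1) y(3)] by simp
  qed
  have union: "cosets G N = (\<Union>B\<in>cosets G M. ?F B)"
  proof -
    have "coset G N x \<subseteq> coset G M x" for x using N(2) by (auto simp: coset_def)
    then have "\<exists>B\<in>cosets G M. C \<subseteq> B" if "C \<in> cosets G N" for C
      using that by (auto simp: cosets_eq_image)
    then show ?thesis by blast
  qed
  have "finite (\<Union>B\<in>cosets G M. ?F B)" using fin fibre by (intro finite_UN_I) auto
  then have "finite (cosets G N)" by (simp only: union[symmetric])
  moreover have "card (\<Union>B\<in>cosets G M. ?F B) = (\<Sum>B\<in>cosets G M. card (?F B))"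
    by (rule card_UN_disjoint[OF fin(1)]) (use fibre disjoint in blast)+
  then have "card (cosets G N) = (\<Sum>B\<in>cosets G M. card (?F B))" by (simp only: union[symmetric])
  ultimately show ?thesis using fibre by simp
qed

lemma finite_cosets_tower:
  assumes N: "add_subgroup N" "N \<subseteq> M" and M: "add_subgroup M" "M \<subseteq> G" and G: "add_subgroup G"
    and fin: "finite (cosets G N)"
  shows "finite (cosets G M) \<and> finite (cosets M N)
    \<and> card (cosets G N) = card (cosets G M) * card (cosets M N)"
proof -
  have "\<Union> (coset G M ` coset G N x) = coset G M x" if x: "x \<in> G" for x
  proof
    show "\<Union> (coset G M ` coset G N x) \<subseteq> coset G M x"
    proof clarify
      fix y z assume "y \<in> coset G N x" "z \<in> coset G M y"
      then have "x - y \<in> M" "y - z \<in> M" "z \<in> G" using N(2) by (auto simp: coset_def)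
      then show "z \<in> coset G M x" using add_subgroup_add[OF M(1)] by (force simp: coset_def)
    qed
    show "coset G M x \<subseteq> \<Union> (coset G M ` coset G N x)" using coset_self[OF N(1) x] by auto
  qed
  then have "cosets G M = (\<lambda>C. \<Union> (coset G M ` C)) ` cosets G N"
    unfolding cosets_eq_image image_image by (auto simp: image_iff)
  then have fin1: "finite (cosets G M)" using fin by simp
  have "finite {C \<in> cosets G N. C \<subseteq> coset G M 0}" using fin by simp
  then have fin2: "finite (cosets M N)"
    using card_cosets_within_coset[OF N M G add_subgroup_zero[OF G]] by simp
  show ?thesis using card_cosets_tower[OF N M G fin1 fin2] fin1 fin2 by simp
qed

lemma card_cosets_antimono:
  assumes N: "add_subgroup N" "N \<subseteq> M" and M: "add_subgroup M" "M \<subseteq> G" and G: "add_subgroup G"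
    and fin: "finite (cosets G N)"
  shows "finite (cosets G M) \<and> card (cosets G M) \<le> card (cosets G N)"
proof -
  have tower: "finite (cosets G M) \<and> finite (cosets M N)
      \<and> card (cosets G N) = card (cosets G M) * card (cosets M N)"
    by (rule finite_cosets_tower[OF assms])
  then have "0 < card (cosets M N)" using card_cosets_pos[OF M(1)] by blast
  then show ?thesis using tower by simp
qed

definition prodset :: "'i set \<Rightarrow> 'g::ab_group_add set \<Rightarrow> ('i \<Rightarrow> 'g) set" where
  "prodset I G = {x. \<forall>i. (i \<in> I \<longrightarrow> x i \<in> G) \<and> (i \<notin> I \<longrightarrow> x i = 0)}"

lemma prodset_memD:
  "X \<in> prodset I G \<Longrightarrow> i \<in> I \<Longrightarrow> X i \<in> G" "X \<in> prodset I G \<Longrightarrow> i \<notin> I \<Longrightarrow> X i = 0"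
  by (simp_all add: prodset_def)

lemma prodset_memI:
  "(\<And>i. i \<in> I \<Longrightarrow> X i \<in> G) \<Longrightarrow> (\<And>i. i \<notin> I \<Longrightarrow> X i = 0) \<Longrightarrow> X \<in> prodset I G"
  by (simp add: prodset_def)

lemma add_subgroup_prodset: "add_subgroup G \<Longrightarrow> add_subgroup (prodset I G)"
  by (auto simp: add_subgroup_def prodset_def)

lemma prodset_mono: "N \<subseteq> M \<Longrightarrow> prodset I N \<subseteq> prodset I M"
  by (auto simp: prodset_def)

lemma card_cosets_prodset:
  fixes I :: "'i set" and G N :: "'g::ab_group_add set"
  assumes N: "add_subgroup N" and I: "finite I"
  shows "card (cosets (prodset I G) (prodset I N)) = card (cosets G N) ^ card I
    \<and> (finite (cosets G N) \<longrightarrow> finite (cosets (prodset I G) (prodset I N)))"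
proof -
  define \<psi> where "\<psi> x = restrict (\<lambda>i. coset G N (x i)) I" for x :: "'i \<Rightarrow> 'g"
  have "\<psi> x = \<psi> y \<longleftrightarrow> x - y \<in> prodset I N" if "x \<in> prodset I G" "y \<in> prodset I G" for x y
  proof -
    have "\<psi> x = \<psi> y \<longleftrightarrow> (\<forall>i\<in>I. coset G N (x i) = coset G N (y i))"
      by (simp add: \<psi>_def restrict_def fun_eq_iff) metis
    also have "\<dots> \<longleftrightarrow> (\<forall>i\<in>I. x i - y i \<in> N)"
      using that coset_eq_iff[OF N] by (auto simp: prodset_def)
    also have "\<dots> \<longleftrightarrow> x - y \<in> prodset I N" using that by (auto simp: prodset_def)
    finally show ?thesis .
  qed
  then have count: "card (cosets (prodset I G) (prodset I N)) = card (\<psi> ` prodset I G)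
      \<and> (finite (cosets (prodset I G) (prodset I N)) \<longleftrightarrow> finite (\<psi> ` prodset I G))"
    by (rule card_cosets_eq_card_image)
  have "\<psi> ` prodset I G = PiE I (\<lambda>_. cosets G N)"
  proof
    show "\<psi> ` prodset I G \<subseteq> PiE I (\<lambda>_. cosets G N)"
      by (auto simp: \<psi>_def prodset_def cosets_eq_image)
    show "PiE I (\<lambda>_. cosets G N) \<subseteq> \<psi> ` prodset I G"
    proof
      fix F assume F: "F \<in> PiE I (\<lambda>_. cosets G N)"
      then have "\<forall>i\<in>I. \<exists>x\<in>G. F i = coset G N x" by (auto simp: cosets_eq_image)
      then obtain r where r: "\<forall>i\<in>I. r i \<in> G \<and> F i = coset G N (r i)" by metis
      define x where "x i = (if i \<in> I then r i else 0)" for i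
      have "x \<in> prodset I G" using r by (auto simp: x_def prodset_def)
      moreover have "\<psi> x = F"
        using F r by (auto simp: \<psi>_def x_def restrict_def PiE_def extensional_def fun_eq_iff)
      ultimately show "F \<in> \<psi> ` prodset I G" by blast
    qed
  qed
  then show ?thesis
    using count card_PiE[OF I, of "\<lambda>_. cosets G N"] finite_PiE[OF I, of "\<lambda>_. cosets G N"]
    by (simp add: prod_constant)
qed

text \<open>\<open>{x \<in> G. \<phi> x \<in> T} / N\<close> and \<open>V / (\<phi> G + T)\<close> are the kernel and the cokernel of the map
  \<open>G/N \<rightarrow> V/T\<close> induced by \<open>\<phi>\<close>.\<close>
lemma card_ker_eq_card_cok:
  fixes G N :: "'a::ab_group_add set" and V T :: "'b::ab_group_add set" and \<phi> :: "'a \<Rightarrow> 'b"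
  assumes G: "add_subgroup G" and N: "add_subgroup N" "N \<subseteq> G"
    and V: "add_subgroup V" and T: "add_subgroup T" "T \<subseteq> V"
    and into: "\<And>x. x \<in> G \<Longrightarrow> \<phi> x \<in> V"
    and hom: "\<And>x y. x \<in> G \<Longrightarrow> y \<in> G \<Longrightarrow> \<phi> (x - y) = \<phi> x - \<phi> y"
    and NT: "\<And>x. x \<in> N \<Longrightarrow> \<phi> x \<in> T"
    and fin: "finite (cosets V T)" and same: "card (cosets G N) = card (cosets V T)"
  shows "finite (cosets {x \<in> G. \<phi> x \<in> T} N) \<and> finite (cosets V {y + z |y z. y \<in> \<phi> ` G \<and> z \<in> T})
    \<and> card (cosets {x \<in> G. \<phi> x \<in> T} N) = card (cosets V {y + z |y z. y \<in> \<phi> ` G \<and> z \<in> T})"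
proof -
  define S where "S = {x \<in> G. \<phi> x \<in> T}"
  define W where "W = {y + z |y z. y \<in> \<phi> ` G \<and> z \<in> T}"
  have S: "add_subgroup S" unfolding S_def by (rule add_subgroup_preimage[OF G T(1) hom])
  have NS: "N \<subseteq> S" using N(2) NT by (auto simp: S_def)
  have W: "add_subgroup W" unfolding W_def
    by (rule add_subgroup_sums[OF add_subgroup_image[OF G hom] T(1)])
  have "0 \<in> \<phi> ` G" using additive_zero[OF G hom] add_subgroup_zero[OF G] by (metis image_eqI)
  then have TW: "T \<subseteq> W" unfolding W_def by (rule subset_sums)
  have "\<phi> ` G \<subseteq> V" using into by blast
  then have WV: "W \<subseteq> V" unfolding W_def by (rule sums_subset[OF V _ T(2)])
  have "0 < card (cosets G N)" using same card_cosets_pos[OF V fin] by simp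
  then have finGN: "finite (cosets G N)" using card_gt_0_iff by blast
  have GSN: "finite (cosets G S) \<and> finite (cosets S N)
      \<and> card (cosets G N) = card (cosets G S) * card (cosets S N)"
    by (rule finite_cosets_tower[OF N(1) NS S _ G finGN]) (auto simp: S_def)
  have VWT: "finite (cosets V W) \<and> finite (cosets W T)
      \<and> card (cosets V T) = card (cosets V W) * card (cosets W T)"
    by (rule finite_cosets_tower[OF T(1) TW W WV V fin])
  have iso: "card (cosets G S) = card (cosets W T)"
  proof (rule conjunct1[OF card_cosets_iso[OF G T(1)]])
    show "\<phi> x \<in> W" if "x \<in> G" for x
      unfolding W_def using that add_subgroup_zero[OF T(1)]
      by (intro CollectI exI[of _ "\<phi> x"] exI[of _ 0]) simp
    show "\<exists>g\<in>G. h - \<phi> g \<in> T" if h: "h \<in> W" for h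
    proof -
      obtain x z where "x \<in> G" "z \<in> T" "h = \<phi> x + z" using h by (auto simp: W_def)
      then show ?thesis by (intro bexI[of _ x]) simp_all
    qed
    show "\<phi> x \<in> T \<longleftrightarrow> x \<in> S" if "x \<in> G" for x using that by (simp add: S_def)
  qed (rule hom)
  have "card (cosets W T) * card (cosets S N) = card (cosets W T) * card (cosets V W)"
    using GSN VWT same iso by (metis mult.commute)
  moreover have "0 < card (cosets W T)" using card_cosets_pos[OF W] VWT by blast
  ultimately have "card (cosets S N) = card (cosets V W)" by simp
  then show ?thesis using GSN VWT unfolding S_def W_def by simp
qed

section \<open>Kernels and cokernels modulo a scalar\<close>

definition subring :: "'a::comm_ring_1 set \<Rightarrow> bool" where
  "subring R \<longleftrightarrow> add_subgroup R \<and> 1 \<in> R \<and> (\<forall>x\<in>R. \<forall>y\<in>R. x * y \<in> R)"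

lemma subring_add_subgroup: "subring R \<Longrightarrow> add_subgroup R"
  by (simp add: subring_def)

lemma subring_1: "subring R \<Longrightarrow> 1 \<in> R"
  by (simp add: subring_def)

lemma subring_mult: "subring R \<Longrightarrow> x \<in> R \<Longrightarrow> y \<in> R \<Longrightarrow> x * y \<in> R"
  by (simp add: subring_def)

lemma subring_power: "subring R \<Longrightarrow> x \<in> R \<Longrightarrow> x ^ k \<in> R"
  by (induction k) (auto simp: subring_1 subring_mult)

definition principal_ideal :: "'a::comm_ring_1 set \<Rightarrow> 'a \<Rightarrow> 'a set" where
  "principal_ideal R t = (\<lambda>x. t * x) ` R"

lemma add_subgroup_principal_ideal: "add_subgroup R \<Longrightarrow> add_subgroup (principal_ideal R t)"
  unfolding principal_ideal_def by (rule add_subgroup_image) (simp_all add: right_diff_distrib)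

lemma principal_ideal_subset: "subring R \<Longrightarrow> t \<in> R \<Longrightarrow> principal_ideal R t \<subseteq> R"
  by (auto simp: principal_ideal_def subring_mult)

lemma principal_ideal_mult_subset:
  "subring R \<Longrightarrow> s \<in> R \<Longrightarrow> principal_ideal R (t * s) \<subseteq> principal_ideal R t"
  by (auto simp: principal_ideal_def mult.assoc intro: subring_mult)

lemma card_cosets_principal_ideal_mult:
  fixes R :: "'a::idom set"
  assumes R: "add_subgroup R" and t: "t \<noteq> 0"
  shows "card (cosets R (principal_ideal R s))
      = card (cosets (principal_ideal R t) (principal_ideal R (t * s)))
    \<and> (finite (cosets R (principal_ideal R s))
      \<longleftrightarrow> finite (cosets (principal_ideal R t) (principal_ideal R (t * s))))"
proof (rule card_cosets_iso[OF R add_subgroup_principal_ideal[OF R], where \<phi> = "\<lambda>x. t * x"])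
  show "t * x \<in> principal_ideal R t" if "x \<in> R" for x
    using that by (auto simp: principal_ideal_def)
  show "t * (x - y) = t * x - t * y" for x y
    by (simp add: algebra_simps)
  show "\<exists>g\<in>R. h - t * g \<in> principal_ideal R (t * s)" if h: "h \<in> principal_ideal R t" for h
  proof -
    obtain g where "g \<in> R" "h = t * g" using h by (auto simp: principal_ideal_def)
    then show ?thesis
      using add_subgroup_zero[OF add_subgroup_principal_ideal[OF R]]
      by (intro bexI[of _ g]) simp_all
  qed
  show "t * x \<in> principal_ideal R (t * s) \<longleftrightarrow> x \<in> principal_ideal R s" for x
    using t by (auto simp: principal_ideal_def image_iff mult.assoc)
qed

lemma quot_eq_cosets: "quot S N = cosets S N"
  unfolding quot_def cosets_def by (simp add: fun_diff_def)

lemma vecs_eq_prodset: "vecs R = prodset UNIV R"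
  by (auto simp: vecs_def prodset_def)

lemma add_subgroup_vecs: "add_subgroup R \<Longrightarrow> add_subgroup (vecs R)"
  unfolding vecs_eq_prodset by (rule add_subgroup_prodset)

lemma smul_set_eq_image: "smul_set t M = (\<lambda>m i. t * m i) ` M"
  by (auto simp: smul_set_def)

lemma smul_set_vecs: "smul_set t (vecs R) = vecs (principal_ideal R t)"
proof
  show "smul_set t (vecs R) \<subseteq> vecs (principal_ideal R t)"
    by (auto simp: smul_set_def vecs_def principal_ideal_def)
  show "vecs (principal_ideal R t) \<subseteq> smul_set t (vecs R)"
  proof
    fix x assume "x \<in> vecs (principal_ideal R t)"
    then have "\<forall>i. \<exists>m\<in>R. x i = t * m" by (auto simp: vecs_def principal_ideal_def)
    then obtain m where "\<forall>i. m i \<in> R \<and> x i = t * m i" by metis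
    then show "x \<in> smul_set t (vecs R)" unfolding smul_set_def vecs_def
      by (auto intro!: exI[of _ m])
  qed
qed

lemma smul_set_subset_vecs: "subring R \<Longrightarrow> t \<in> R \<Longrightarrow> smul_set t (vecs R) \<subseteq> vecs R"
  unfolding smul_set_def vecs_def by (auto intro: subring_mult)

lemma add_subgroup_smul_set: "add_subgroup M \<Longrightarrow> add_subgroup (smul_set t M)"
  unfolding smul_set_eq_image
  by (rule add_subgroup_image) (simp_all add: fun_eq_iff right_diff_distrib)

lemma sum_set_eq: "sum_set M N = {m + k |m k. m \<in> M \<and> k \<in> N}"
  by (auto simp: sum_set_def plus_fun_def)

lemma add_subgroup_sum_set: "add_subgroup M \<Longrightarrow> add_subgroup N \<Longrightarrow> add_subgroup (sum_set M N)"
  unfolding sum_set_eq by (rule add_subgroup_sums)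

lemma mat_vec_diff: "mat_vec A (x - y) = mat_vec A x - mat_vec A y"
  by (simp add: mat_vec_def fun_eq_iff right_diff_distrib sum_subtractf)

lemma mat_vec_add: "mat_vec A (x + y) = mat_vec A x + mat_vec A y"
  by (simp add: mat_vec_def fun_eq_iff distrib_left sum.distrib)

lemma mat_vec_zero: "mat_vec A 0 = 0"
  using mat_vec_diff[of A 0 0] by simp

lemma mat_vec_scale: "mat_vec A (\<lambda>i. t * x i) = (\<lambda>i. t * mat_vec A x i)"
  by (simp add: mat_vec_def fun_eq_iff sum_distrib_left algebra_simps)

lemma mat_vec_in_vecs:
  "subring R \<Longrightarrow> \<forall>i j. A i j \<in> R \<Longrightarrow> x \<in> vecs R \<Longrightarrow> mat_vec A x \<in> vecs R"
  unfolding mat_vec_def vecs_def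
  by (auto intro!: add_subgroup_sum subring_add_subgroup subring_mult)

lemma add_subgroup_mat_vec_image:
  "add_subgroup R \<Longrightarrow> add_subgroup (mat_vec A ` vecs R)"
  by (rule add_subgroup_image[OF add_subgroup_vecs]) (simp_all add: mat_vec_diff)

lemma card_ker_mod_eq_card_cok_mod:
  fixes R :: "'a::comm_ring_1 set" and A :: "'n::finite \<Rightarrow> 'n \<Rightarrow> 'a"
  assumes R: "subring R" and A: "\<forall>i j. A i j \<in> R" and t: "t \<in> R"
    and fin: "finite (cosets (vecs R :: ('n \<Rightarrow> 'a) set) (smul_set t (vecs R)))"
  shows "finite (ker_mod R A t) \<and> finite (cok_mod R A t)
    \<and> card (ker_mod R A t) = card (cok_mod R A t)"
proof -
  let ?V = "vecs R :: ('n \<Rightarrow> 'a) set"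
  have V: "add_subgroup ?V" by (rule add_subgroup_vecs[OF subring_add_subgroup[OF R]])
  have T: "add_subgroup (smul_set t ?V)" by (rule add_subgroup_smul_set[OF V])
  have "mat_vec A x \<in> smul_set t ?V" if "x \<in> smul_set t ?V" for x
    using that mat_vec_in_vecs[OF R A] by (auto simp: smul_set_def mat_vec_scale)
  then show ?thesis
    using card_ker_eq_card_cok[OF V T smul_set_subset_vecs[OF R t] V T smul_set_subset_vecs[OF R t]
        mat_vec_in_vecs[OF R A] mat_vec_diff _ fin refl]
    unfolding ker_mod_def cok_mod_def quot_eq_cosets sum_set_eq by blast
qed

text \<open>Multiplication by \<open>t\<close> gives \<open>[V : \<Lambda>] = [tV : t\<Lambda>]\<close>; comparing the towers
  \<open>V \<supseteq> \<Lambda> \<supseteq> t\<Lambda>\<close> and \<open>V \<supseteq> tV \<supseteq> t\<Lambda>\<close> yields \<open>[\<Lambda> : t\<Lambda>] = [V : tV]\<close>.\<close>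
lemma card_cosets_smul_set:
  fixes R :: "'a::idom set" and Lam :: "('n::finite \<Rightarrow> 'a) set"
  assumes R: "subring R" and t: "t \<in> R" "t \<noteq> 0"
    and Lam: "add_subgroup Lam" "Lam \<subseteq> vecs R" "smul_set t Lam \<subseteq> Lam"
    and fin_Lam: "finite (cosets (vecs R) Lam)"
    and fin_t: "finite (cosets (vecs R :: ('n \<Rightarrow> 'a) set) (smul_set t (vecs R)))"
  shows "finite (cosets Lam (smul_set t Lam))
    \<and> card (cosets Lam (smul_set t Lam))
      = card (cosets (vecs R :: ('n \<Rightarrow> 'a) set) (smul_set t (vecs R)))"
proof -
  let ?V = "vecs R :: ('n \<Rightarrow> 'a) set"
  let ?T = "smul_set t ?V" and ?tL = "smul_set t Lam"
  have V: "add_subgroup ?V" by (rule add_subgroup_vecs[OF subring_add_subgroup[OF R]])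
  have T: "add_subgroup ?T" by (rule add_subgroup_smul_set[OF V])
  have tL: "add_subgroup ?tL" by (rule add_subgroup_smul_set[OF Lam(1)])
  have tLT: "?tL \<subseteq> ?T" using Lam(2) by (auto simp: smul_set_def)
  have TV: "?T \<subseteq> ?V" by (rule smul_set_subset_vecs[OF R t(1)])
  have scale: "card (cosets ?V Lam) = card (cosets ?T ?tL)
      \<and> (finite (cosets ?V Lam) \<longleftrightarrow> finite (cosets ?T ?tL))"
  proof (rule card_cosets_iso[OF V tL])
    show "(\<lambda>i. t * x i) \<in> ?T" if "x \<in> ?V" for x using that by (auto simp: smul_set_def)
    show "(\<lambda>i. t * (x - y) i) = (\<lambda>i. t * x i) - (\<lambda>i. t * y i)" for x y
      by (simp add: fun_eq_iff right_diff_distrib)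
    show "\<exists>g\<in>?V. h - (\<lambda>i. t * g i) \<in> ?tL" if "h \<in> ?T" for h
    proof -
      obtain g where "g \<in> ?V" "h = (\<lambda>i. t * g i)" using \<open>h \<in> ?T\<close> by (auto simp: smul_set_def)
      then show ?thesis using add_subgroup_zero[OF tL] by (intro bexI[of _ g]) simp_all
    qed
    show "(\<lambda>i. t * x i) \<in> ?tL \<longleftrightarrow> x \<in> Lam" for x
    proof
      assume "(\<lambda>i. t * x i) \<in> ?tL"
      then obtain l where "l \<in> Lam" "(\<lambda>i. t * x i) = (\<lambda>i. t * l i)" by (auto simp: smul_set_def)
      moreover then have "x = l" using t(2) by (simp add: fun_eq_iff)
      ultimately show "x \<in> Lam" by simp
    qed (auto simp: smul_set_def)
  qed
  have VtL: "finite (cosets ?V ?tL)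
      \<and> card (cosets ?V ?tL) = card (cosets ?V ?T) * card (cosets ?T ?tL)"
    by (rule card_cosets_tower[OF tL tLT T TV V fin_t]) (use scale fin_Lam in blast)
  have VLtL: "finite (cosets ?V Lam) \<and> finite (cosets Lam ?tL)
      \<and> card (cosets ?V ?tL) = card (cosets ?V Lam) * card (cosets Lam ?tL)"
    by (rule finite_cosets_tower[OF tL Lam(3) Lam(1) Lam(2) V]) (use VtL in blast)
  have "card (cosets ?V Lam) * card (cosets Lam ?tL) = card (cosets ?V Lam) * card (cosets ?V ?T)"
    using VtL VLtL scale by (metis mult.commute)
  then have "card (cosets Lam ?tL) = card (cosets ?V ?T)"
    by (simp only: nat_mult_eq_cancel1[OF card_cosets_pos[OF V fin_Lam]])
  then show ?thesis using VLtL by simp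
qed

lemma card_ker_incl_mod_eq_card_cok_incl_mod:
  fixes R :: "'a::idom set" and Lam :: "('n::finite \<Rightarrow> 'a) set"
  assumes R: "subring R" and t: "t \<in> R" "t \<noteq> 0"
    and Lam: "add_subgroup Lam" "Lam \<subseteq> vecs R" "smul_set t Lam \<subseteq> Lam"
    and fin_Lam: "finite (cosets (vecs R) Lam)"
    and fin_t: "finite (cosets (vecs R :: ('n \<Rightarrow> 'a) set) (smul_set t (vecs R)))"
  shows "finite (ker_incl_mod R Lam t) \<and> finite (cok_incl_mod R Lam t)
    \<and> card (ker_incl_mod R Lam t) = card (cok_incl_mod R Lam t)"
proof -
  let ?V = "vecs R :: ('n \<Rightarrow> 'a) set"
  have V: "add_subgroup ?V" by (rule add_subgroup_vecs[OF subring_add_subgroup[OF R]])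
  have same: "card (cosets Lam (smul_set t Lam)) = card (cosets ?V (smul_set t ?V))"
    using card_cosets_smul_set[OF R t Lam fin_Lam fin_t] by blast
  have tLT: "smul_set t Lam \<subseteq> smul_set t ?V" using Lam(2) by (auto simp: smul_set_def)
  have "finite (cosets {x \<in> Lam. x \<in> smul_set t ?V} (smul_set t Lam))
      \<and> finite (cosets ?V {y + z |y z. y \<in> Lam \<and> z \<in> smul_set t ?V})
      \<and> card (cosets {x \<in> Lam. x \<in> smul_set t ?V} (smul_set t Lam))
        = card (cosets ?V {y + z |y z. y \<in> Lam \<and> z \<in> smul_set t ?V})"
    using card_ker_eq_card_cok[OF Lam(1) add_subgroup_smul_set[OF Lam(1)] Lam(3) V
        add_subgroup_smul_set[OF V] smul_set_subset_vecs[OF R t(1)], of "\<lambda>x. x",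
        OF subsetD[OF Lam(2)] refl subsetD[OF tLT] fin_t same]
    by simp
  moreover have "{x \<in> Lam. x \<in> smul_set t ?V} = Lam \<inter> smul_set t ?V" by blast
  ultimately show ?thesis
    unfolding ker_incl_mod_def cok_incl_mod_def quot_eq_cosets sum_set_eq by simp
qed

section \<open>Discrete non-archimedean absolute values\<close>

lemma finite_has_max:
  fixes g :: "'i \<Rightarrow> 'b::linorder"
  assumes "finite J" "J \<noteq> {}"
  shows "\<exists>j\<in>J. \<forall>i\<in>J. g i \<le> g j"
proof -
  have "Max (g ` J) \<in> g ` J" using assms by simp
  then obtain j where "j \<in> J" "g j = Max (g ` J)" by auto
  moreover have "\<forall>i\<in>J. g i \<le> Max (g ` J)" using assms by simp
  ultimately show ?thesis by metis
qed

locale discrete_abs_value =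
  fixes av :: "'a::field \<Rightarrow> real" and c :: real
  assumes nonarch: "nonarch_abs av" and c_pos: "0 < c" and c_less_1: "c < 1"
    and value_group: "av ` (UNIV - {0}) = range (\<lambda>k::int. c powi k)"
begin

lemma av_nonneg: "0 \<le> av x"
  using nonarch by (simp add: nonarch_abs_def abs_value_def)

lemma av_eq_0_iff: "av x = 0 \<longleftrightarrow> x = 0"
  using nonarch by (simp add: nonarch_abs_def abs_value_def)

lemma av_mult: "av (x * y) = av x * av y"
  using nonarch by (simp add: nonarch_abs_def abs_value_def)

lemma av_ultra: "av (x + y) \<le> max (av x) (av y)"
  using nonarch by (simp add: nonarch_abs_def)

lemma av_0 [simp]: "av 0 = 0"
  using av_eq_0_iff by simp

lemma av_pos: "x \<noteq> 0 \<Longrightarrow> 0 < av x"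
  using av_nonneg[of x] av_eq_0_iff[of x] by linarith

lemma av_1 [simp]: "av 1 = 1"
  using av_mult[of 1 1] av_eq_0_iff[of 1] by simp

lemma av_minus [simp]: "av (- x) = av x"
proof -
  have "(av (- 1))\<^sup>2 = 1" using av_mult[of "- 1" "- 1"] by (simp add: power2_eq_square)
  then have "av (- 1) = 1" using av_nonneg[of "- 1"] power2_eq_1_iff[of "av (- 1)"] by auto
  then show ?thesis using av_mult[of "- 1" x] by simp
qed

lemma av_diff: "av (x - y) \<le> max (av x) (av y)"
  using av_ultra[of x "- y"] by simp

lemma av_diff_commute: "av (x - y) = av (y - x)"
  using av_minus[of "y - x"] by simp

lemma av_inverse: "av (inverse x) = inverse (av x)"
proof (cases "x = 0")
  case False
  then have "av x * av (inverse x) = 1" using av_mult[of x "inverse x"] by simp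
  then show ?thesis by (metis inverse_unique)
qed simp

lemma av_divide: "av (x / y) = av x / av y"
  by (simp add: divide_inverse av_mult av_inverse)

lemma av_power: "av (x ^ n) = av x ^ n"
  by (induction n) (simp_all add: av_mult)

lemma av_add_strict: "av x < av y \<Longrightarrow> av (x + y) = av y"
  using av_ultra[of x y] av_diff[of "x + y" x] by (simp add: max_def split: if_splits)

lemma av_sum_le: "0 \<le> B \<Longrightarrow> (\<And>i. i \<in> I \<Longrightarrow> av (h i) \<le> B) \<Longrightarrow> av (sum h I) \<le> B"
proof (induction I rule: infinite_finite_induct)
  case (insert x F)
  then have "av (h x) \<le> B" "av (sum h F) \<le> B" by simp_all
  then show ?case using av_ultra[of "h x" "sum h F"] insert(1,2) by simp
qed simp_all

lemma av_sum_less: "0 < B \<Longrightarrow> (\<And>i. i \<in> I \<Longrightarrow> av (h i) < B) \<Longrightarrow> av (sum h I) < B"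
proof (induction I rule: infinite_finite_induct)
  case (insert x F)
  then have "av (h x) < B" "av (sum h F) < B" by simp_all
  then show ?case using av_ultra[of "h x" "sum h F"] insert(1,2) by simp
qed simp_all

lemma av_term_le_sum:
  assumes J: "finite J" and j: "j \<in> J"
    and distinct: "\<And>j1 j2. j1 \<in> J \<Longrightarrow> j2 \<in> J \<Longrightarrow> j1 \<noteq> j2 \<Longrightarrow> av (X j1) = av (X j2) \<Longrightarrow> av (X j1) = 0"
  shows "av (X j) \<le> av (sum X J)"
proof -
  obtain jm where jm: "jm \<in> J" "\<forall>i\<in>J. av (X i) \<le> av (X jm)"
    using finite_has_max[OF J, of "\<lambda>i. av (X i)"] j by blast
  show ?thesis
  proof (cases "av (X jm) = 0")
    case True
    then show ?thesis using jm j av_nonneg[of "sum X J"] by fastforce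
  next
    case False
    then have pos: "0 < av (X jm)" using av_nonneg[of "X jm"] by linarith
    have "av (X i) < av (X jm)" if "i \<in> J - {jm}" for i
      using jm that distinct[of i jm] False by fastforce
    then have "av (sum X (J - {jm})) < av (X jm)" by (rule av_sum_less[OF pos])
    then have "av (sum X (J - {jm}) + X jm) = av (X jm)" by (rule av_add_strict)
    then have "av (sum X J) = av (X jm)"
      using sum.remove[OF J jm(1), of X] by (simp add: add.commute)
    then show ?thesis using jm j by simp
  qed
qed

lemma av_eq_c_powi: "x \<noteq> 0 \<Longrightarrow> \<exists>k. av x = c powi k"
  using value_group by blast

lemma c_powi_le_iff: "c powi k \<le> c powi l \<longleftrightarrow> l \<le> k"
  using power_int_strict_decreasing[of k l c] power_int_strict_decreasing[of l k c] c_pos c_less_1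
  by (cases k l rule: linorder_cases) auto

lemma c_powi_less_iff: "c powi k < c powi l \<longleftrightarrow> l < k"
  using c_powi_le_iff[of l k] by linarith

lemma c_powi_le_1_iff: "c powi k \<le> 1 \<longleftrightarrow> 0 \<le> k"
  using c_powi_le_iff[of k 0] by simp

lemma c_powi_less_1_iff: "c powi k < 1 \<longleftrightarrow> 0 < k"
  using c_powi_less_iff[of k 0] by simp

lemma c_powi_inj: "c powi k = c powi l \<Longrightarrow> k = l"
  using c_powi_le_iff[of k l] c_powi_le_iff[of l k] by simp

lemma av_less_1_imp_le_c: "av x < 1 \<Longrightarrow> av x \<le> c"
proof (cases "x = 0")
  case False
  assume "av x < 1"
  moreover obtain k where "av x = c powi k" using av_eq_c_powi[OF False] by blast
  ultimately show ?thesis using c_powi_le_iff[of k 1] c_powi_less_1_iff[of k] by simp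
qed (use c_pos in simp)

lemma ex_uniformizer: "\<exists>\<pi>. av \<pi> = c"
proof -
  have "c powi 1 \<in> av ` (UNIV - {0})" using value_group by blast
  then show ?thesis by auto
qed

lemma mem_ints_iff: "x \<in> ints av \<longleftrightarrow> av x \<le> 1"
  by (simp add: ints_def)

lemma subring_ints: "subring (ints av)"
  unfolding subring_def add_subgroup_def
proof (intro conjI ballI)
  fix x y assume "x \<in> ints av" "y \<in> ints av"
  then show "x - y \<in> ints av" "x * y \<in> ints av" using av_diff[of x y] av_mult[of x y]
    by (simp_all add: mem_ints_iff mult_le_one av_nonneg)
qed (simp_all add: mem_ints_iff)

lemma add_subgroup_ints: "add_subgroup (ints av)"
  using subring_ints subring_add_subgroup by blast

lemma divide_in_ints: "y \<noteq> 0 \<Longrightarrow> av x \<le> av y \<Longrightarrow> x / y \<in> ints av"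
  by (simp add: mem_ints_iff av_divide av_pos)

lemma power_mult_in_ints:
  assumes A: "finite A" and t: "av t < 1"
  shows "\<exists>m. \<forall>y\<in>A. t ^ m * y \<in> ints av"
proof -
  define B where "B = Max (insert 1 (av ` A))"
  have B: "1 \<le> B" "\<And>y. y \<in> A \<Longrightarrow> av y \<le> B" using A by (auto simp: B_def)
  obtain m where m: "av t ^ m < 1 / B"
    using real_arch_pow_inv[of "1 / B" "av t"] B(1) t by auto
  have "av (t ^ m * y) \<le> 1" if "y \<in> A" for y
  proof -
    have "av (t ^ m * y) \<le> av t ^ m * B"
      using B(2)[OF that] av_nonneg[of t] by (simp add: av_mult av_power mult_left_mono)
    also have "\<dots> \<le> 1" using m B(1) by (simp add: field_simps)
    finally show ?thesis .
  qed
  then show ?thesis by (auto simp: mem_ints_iff)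
qed

lemma eq_0_if_av_le_powers:
  assumes q: "q < 1" and le: "\<And>n. av x \<le> q ^ n"
  shows "x = 0"
proof (rule ccontr)
  assume "x \<noteq> 0"
  then obtain n where "q ^ n < av x" using real_arch_pow_inv[OF av_pos q] by blast
  then show False using le[of n] by simp
qed

lemma complete_limit:
  assumes complete: "complete_abs av" and steps: "\<And>n. av (X (Suc n) - X n) \<le> c ^ n"
  shows "\<exists>l. \<forall>n. av (X n - l) \<le> c ^ n"
proof -
  have tail: "av (X m - X n) \<le> c ^ n" if "n \<le> m" for m n
    using that
  proof (induction m rule: dec_induct)
    case (step m)
    have "c ^ m \<le> c ^ n" using step(1) c_pos c_less_1 by (simp add: power_decreasing)
    then have "av (X (Suc m) - X m) \<le> c ^ n" using steps[of m] by linarith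
    then show ?case
      using av_ultra[of "X (Suc m) - X m" "X m - X n"] step(3) by (simp add: algebra_simps)
  qed (use c_pos in simp)
  have "\<exists>N. \<forall>m\<ge>N. \<forall>n\<ge>N. av (X m - X n) < e" if e: "0 < e" for e
  proof -
    obtain N where N: "c ^ N < e" using real_arch_pow_inv[OF e c_less_1] by blast
    have "av (X m - X n) < e" if "N \<le> m" "N \<le> n" for m n
    proof -
      have "av (X m - X n) \<le> c ^ min m n"
        using tail[of n m] tail[of m n] av_diff_commute[of "X m" "X n"] by (cases "n \<le> m") auto
      also have "\<dots> \<le> c ^ N" using that c_pos c_less_1 by (simp add: power_decreasing)
      finally show ?thesis using N by simp
    qed
    then show ?thesis by blast
  qed
  then obtain l where l: "\<And>e. 0 < e \<Longrightarrow> \<exists>N. \<forall>n\<ge>N. av (X n - l) < e"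
    using complete unfolding complete_abs_def by blast
  have "av (X n - l) \<le> c ^ n" for n
  proof (rule ccontr)
    assume "\<not> ?thesis"
    then have gt: "c ^ n < av (X n - l)" by simp
    then obtain N where N: "\<forall>m\<ge>N. av (X m - l) < av (X n - l)" using l c_pos
      by (meson less_trans zero_less_power)
    have "av (X n - l) \<le> max (av (X n - X (max N n))) (av (X (max N n) - l))"
      using av_ultra[of "X n - X (max N n)" "X (max N n) - l"] by simp
    moreover have "av (X n - X (max N n)) \<le> c ^ n"
      using tail[of n "max N n"] av_diff_commute by simp
    moreover have "av (X (max N n) - l) < av (X n - l)" using N by simp
    ultimately show False using gt by linarith
  qed
  then show ?thesis by blast
qed

lemma principal_ideal_eq:
  assumes "t \<noteq> 0" "u \<noteq> 0" "av t = av u"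
  shows "principal_ideal (ints av) t = principal_ideal (ints av) u"
proof -
  have "principal_ideal (ints av) t \<subseteq> principal_ideal (ints av) u"
    if "t \<noteq> 0" "u \<noteq> 0" "av t = av u" for t u
  proof
    fix z assume "z \<in> principal_ideal (ints av) t"
    then obtain x where x: "x \<in> ints av" "z = t * x" by (auto simp: principal_ideal_def)
    have "t / u * x \<in> ints av" using x that by (simp add: mem_ints_iff av_mult av_divide av_pos)
    moreover have "z = u * (t / u * x)" using x that by simp
    ultimately show "z \<in> principal_ideal (ints av) u"
      unfolding principal_ideal_def by (rule rev_image_eqI)
  qed
  then show ?thesis using assms by (metis subset_antisym)
qed

lemma principal_ideal_uniformizer: "av \<pi> = c \<Longrightarrow> principal_ideal (ints av) \<pi> = max_ideal av"
proof -
  assume \<pi>: "av \<pi> = c"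
  then have \<pi>0: "\<pi> \<noteq> 0" using c_pos by auto
  show ?thesis
  proof
    show "principal_ideal (ints av) \<pi> \<subseteq> max_ideal av"
    proof
      fix z assume "z \<in> principal_ideal (ints av) \<pi>"
      then obtain x where x: "av x \<le> 1" "z = \<pi> * x" by (auto simp: principal_ideal_def mem_ints_iff)
      then have "av z \<le> c" using \<pi> c_pos av_nonneg[of x] by (simp add: av_mult mult_left_le)
      then show "z \<in> max_ideal av" using c_less_1 by (simp add: max_ideal_def)
    qed
    show "max_ideal av \<subseteq> principal_ideal (ints av) \<pi>"
    proof
      fix x assume "x \<in> max_ideal av"
      then have "x / \<pi> \<in> ints av"
        using av_less_1_imp_le_c \<pi> divide_in_ints[OF \<pi>0] by (simp add: max_ideal_def)
      moreover have "x = \<pi> * (x / \<pi>)" using \<pi>0 by simp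
      ultimately show "x \<in> principal_ideal (ints av) \<pi>" unfolding principal_ideal_def by blast
    qed
  qed
qed

lemma finite_cosets_uniformizer_power:
  assumes res: "finite_residue_field av" and \<pi>: "av \<pi> = c"
  shows "finite (cosets (ints av) (principal_ideal (ints av) (\<pi> ^ k)))"
proof (induction k)
  case 0
  have "principal_ideal (ints av) (\<pi> ^ 0) = ints av" by (auto simp: principal_ideal_def)
  moreover have "coset (ints av) (ints av) x = ints av" if "x \<in> ints av" for x
    unfolding coset_def using add_subgroup_diff[OF add_subgroup_ints that] by blast
  then have "cosets (ints av) (ints av) \<subseteq> {ints av}" unfolding cosets_eq_image by blast
  ultimately show ?case using finite_subset by fastforce
next
  case (Suc k)
  have \<pi>0: "\<pi> \<noteq> 0" using \<pi> c_pos by auto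
  have \<pi>_ints: "\<pi> \<in> ints av" using \<pi> c_less_1 by (simp add: mem_ints_iff)
  let ?M = "principal_ideal (ints av) (\<pi> ^ k)" and ?N = "principal_ideal (ints av) (\<pi> ^ k * \<pi>)"
  have "finite (cosets (ints av) (principal_ideal (ints av) \<pi>))"
    using res principal_ideal_uniformizer[OF \<pi>]
    unfolding finite_residue_field_def cosets_def by simp
  then have "finite (cosets ?M ?N)"
    using card_cosets_principal_ideal_mult[OF add_subgroup_ints, of "\<pi> ^ k" \<pi>] \<pi>0 by simp
  then have "finite (cosets (ints av) ?N)"
    using card_cosets_tower[OF add_subgroup_principal_ideal[OF add_subgroup_ints]
        principal_ideal_mult_subset[OF subring_ints \<pi>_ints]
        add_subgroup_principal_ideal[OF add_subgroup_ints]
        principal_ideal_subset[OF subring_ints subring_power[OF subring_ints \<pi>_ints]]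
        add_subgroup_ints Suc.IH]
    by blast
  then show ?case by (simp add: mult.commute)
qed

lemma finite_cosets_principal_ideal:
  assumes res: "finite_residue_field av" and t: "t \<in> ints av" "t \<noteq> 0"
  shows "finite (cosets (ints av) (principal_ideal (ints av) t))"
proof -
  obtain \<pi> where \<pi>: "av \<pi> = c" using ex_uniformizer by blast
  obtain k where k: "av t = c powi k" using av_eq_c_powi[OF t(2)] by blast
  then have "0 \<le> k" using t(1) c_powi_le_1_iff by (simp add: mem_ints_iff)
  then have "av t = av (\<pi> ^ nat k)" using k \<pi> by (simp add: av_power power_int_def)
  moreover have "\<pi> ^ nat k \<noteq> 0" using \<pi> c_pos by auto
  ultimately have "principal_ideal (ints av) t = principal_ideal (ints av) (\<pi> ^ nat k)"
    using principal_ideal_eq t by blast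
  then show ?thesis using finite_cosets_uniformizer_power[OF res \<pi>] by simp
qed

lemma finite_cosets_smul_set_vecs:
  assumes res: "finite_residue_field av" and t: "t \<in> ints av" "t \<noteq> 0"
  shows "finite (cosets (vecs (ints av) :: ('n::finite \<Rightarrow> 'a) set) (smul_set t (vecs (ints av))))"
proof -
  have "finite (cosets (prodset (UNIV :: 'n set) (ints av))
      (prodset UNIV (principal_ideal (ints av) t)))"
    using card_cosets_prodset[OF add_subgroup_principal_ideal[OF add_subgroup_ints] finite_UNIV]
      finite_cosets_principal_ideal[OF res t] by blast
  moreover have "smul_set t (vecs (ints av) :: ('n \<Rightarrow> 'a) set) = vecs (principal_ideal (ints av) t)"
    by (rule smul_set_vecs)
  ultimately show ?thesis by (simp only: vecs_eq_prodset)
qed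

end

section \<open>Field embeddings\<close>

lemma field_emb_add: "field_emb f \<Longrightarrow> f (x + y) = f x + f y"
  by (simp add: field_emb_def)

lemma field_emb_mult: "field_emb f \<Longrightarrow> f (x * y) = f x * f y"
  by (simp add: field_emb_def)

lemma field_emb_1: "field_emb f \<Longrightarrow> f 1 = 1"
  by (simp add: field_emb_def)

lemma field_emb_0: "field_emb f \<Longrightarrow> f 0 = 0"
  using field_emb_add[of f 0 0] by (metis add_cancel_right_right add_0)

lemma field_emb_minus: "field_emb f \<Longrightarrow> f (- x) = - f x"
  using field_emb_add[of f x "- x"] field_emb_0[of f] by (metis minus_unique add.right_inverse)

lemma field_emb_diff: "field_emb f \<Longrightarrow> f (x - y) = f x - f y"
  using field_emb_add[of f x "- y"] field_emb_minus[of f y] by simp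

lemma field_emb_sum: "field_emb f \<Longrightarrow> f (sum g A) = (\<Sum>a\<in>A. f (g a))"
  by (induction A rule: infinite_finite_induct) (simp_all add: field_emb_0 field_emb_add)

lemma field_emb_power: "field_emb f \<Longrightarrow> f (x ^ n) = f x ^ n"
  by (induction n) (simp_all add: field_emb_1 field_emb_mult)

lemma field_emb_inverse: "field_emb f \<Longrightarrow> f (inverse x) = inverse (f x)"
proof (cases "x = 0")
  case False
  assume fe: "field_emb f"
  have "f x * f (inverse x) = 1"
    using field_emb_mult[OF fe, of x "inverse x"] False field_emb_1[OF fe] by simp
  then show ?thesis by (metis inverse_unique)
qed (simp add: field_emb_0)

lemma field_emb_divide: "field_emb f \<Longrightarrow> f (x / y) = f x / f y"
  by (simp add: divide_inverse field_emb_mult field_emb_inverse)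

lemma field_emb_eq_0_iff: "field_emb f \<Longrightarrow> f x = 0 \<longleftrightarrow> x = 0"
  using field_emb_inverse[of f x] field_emb_mult[of f x "inverse x"] field_emb_1[of f]
    field_emb_0[of f] by (cases "x = 0") auto

lemma vector_space_ext_scale: "field_emb f \<Longrightarrow> vector_space (ext_scale f)"
  unfolding vector_space_def ext_scale_def
  by (simp add: distrib_left distrib_right field_emb_add field_emb_mult field_emb_1)

lemma independent_if_trivial_relations:
  fixes f :: "'k::field \<Rightarrow> 'l::field" and w :: "'i \<Rightarrow> 'l"
  assumes fe: "field_emb f" and D: "finite D"
    and hind: "\<And>a. (\<Sum>k\<in>D. f (a k) * w k) = 0 \<Longrightarrow> \<forall>k\<in>D. a k = 0"
  shows "inj_on w D \<and> module.independent (ext_scale f) (w ` D)"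
proof -
  interpret V: vector_space "ext_scale f" by (rule vector_space_ext_scale[OF fe])
  have inj: "inj_on w D"
  proof (rule inj_onI, rule ccontr)
    fix k1 k2 assume k: "k1 \<in> D" "k2 \<in> D" "w k1 = w k2" "k1 \<noteq> k2"
    define a where "a k = (if k = k1 then 1 else if k = k2 then -1 else (0::'k))" for k
    have "(\<Sum>k\<in>D. f (a k) * w k)
        = (\<Sum>k\<in>D. (if k = k1 then w k1 else 0) + (if k = k2 then - w k2 else 0))"
      using k(4) by (intro sum.cong)
        (auto simp: a_def field_emb_1[OF fe] field_emb_0[OF fe] field_emb_minus[OF fe])
    also have "\<dots> = w k1 - w k2" using k D by (simp add: sum.distrib)
    finally have "(\<Sum>k\<in>D. f (a k) * w k) = 0" using k(3) by simp
    then have "a k1 = 0" using hind k(1) by blast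
    then show False by (simp add: a_def)
  qed
  have "\<not> V.dependent (w ` D)"
  proof
    assume "V.dependent (w ` D)"
    then obtain u where u: "\<exists>v\<in>w ` D. u v \<noteq> 0" "(\<Sum>v\<in>w ` D. ext_scale f (u v) v) = 0"
      using V.dependent_finite[of "w ` D"] D by blast
    have "(\<Sum>k\<in>D. f (u (w k)) * w k) = 0"
      using u(2) sum.reindex[OF inj, of "\<lambda>v. ext_scale f (u v) v"] by (simp add: ext_scale_def)
    then have "\<forall>k\<in>D. u (w k) = 0" using hind[of "\<lambda>k. u (w k)"] by blast
    then show False using u(1) by blast
  qed
  then show ?thesis using inj by simp
qed

lemma independent_card_le_ext_degree:
  fixes f :: "'k::field \<Rightarrow> 'l::field"
  assumes fx: "finite_ext f" and ind: "module.independent (ext_scale f) S"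
  shows "finite S \<and> card S \<le> ext_degree f"
proof -
  have fe: "field_emb f" using fx by (simp add: finite_ext_def)
  interpret V: vector_space "ext_scale f" by (rule vector_space_ext_scale[OF fe])
  obtain B0 where B0: "finite B0" "V.span B0 = UNIV" using fx by (auto simp: finite_ext_def)
  obtain B where B: "V.independent B" "UNIV \<subseteq> V.span B" "card B = V.dim UNIV"
    using V.basis_exists[of UNIV] by metis
  have fB: "finite B" using V.independent_span_bound[OF B0(1) B(1)] B0(2) by simp
  have "finite S \<and> card S \<le> card B" using V.independent_span_bound[OF fB ind] B(2) by blast
  then show ?thesis using B(3) by (simp add: ext_degree_def)
qed

lemma card_basis_eq_ext_degree:
  fixes f :: "'k::field \<Rightarrow> 'l::field" and w :: "'i \<Rightarrow> 'l"
  assumes fe: "field_emb f" and D: "finite D"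
    and hind: "\<And>a. (\<Sum>k\<in>D. f (a k) * w k) = 0 \<Longrightarrow> \<forall>k\<in>D. a k = 0"
    and span: "\<And>x. \<exists>a. x = (\<Sum>k\<in>D. f (a k) * w k)"
  shows "card D = ext_degree f"
proof -
  interpret V: vector_space "ext_scale f" by (rule vector_space_ext_scale[OF fe])
  have i: "inj_on w D \<and> V.independent (w ` D)"
    by (rule independent_if_trivial_relations[OF fe D hind])
  have "V.span (w ` D) = UNIV"
  proof -
    have "x \<in> V.span (w ` D)" for x
    proof -
      obtain a where a: "x = (\<Sum>k\<in>D. f (a k) * w k)" using span by blast
      have "(\<Sum>k\<in>D. ext_scale f (a k) (w k)) \<in> V.span (w ` D)"
        by (intro V.span_sum V.span_scale V.span_base) simp
      then show ?thesis using a by (simp add: ext_scale_def)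
    qed
    then show ?thesis by blast
  qed
  then have "V.dim UNIV = card (w ` D)" using V.dim_eq_card[of "w ` D" UNIV] i V.span_UNIV by simp
  then show ?thesis using i card_image by (metis ext_degree_def)
qed

section \<open>An integral basis of \<open>O_L\<close> over \<open>O_K\<close>\<close>

lemma eq_if_same_residue:
  fixes k1 k2 :: int
  assumes "int e * k1 + int j1 = int e * k2 + int j2" "j1 < e" "j2 < e"
  shows "j1 = j2"
proof -
  have "int j1 = (int e * k1 + int j1) mod int e" using assms(2) by simp
  also have "\<dots> = (int e * k2 + int j2) mod int e" using assms(1) by simp
  also have "\<dots> = int j2" using assms(3) by simp
  finally show ?thesis by simp
qed

locale local_extension = K: discrete_abs_value avK cK + L: discrete_abs_value avL cL
  for avK :: "'k::field \<Rightarrow> real" and cK and avL :: "'l::field \<Rightarrow> real" and cL +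
  fixes f :: "'k \<Rightarrow> 'l" and p :: 'k and s :: real
  assumes fext: "finite_ext f" and s_pos: "0 < s" and av_f: "\<And>a. avL (f a) = avK a powr s"
    and av_p: "avK p = cK" and complete_K: "complete_abs avK"
    and residue_K: "finite_residue_field avK" and residue_L: "finite_residue_field avL"
begin

abbreviation O_K :: "'k set" where "O_K \<equiv> ints avK"
abbreviation O_L :: "'l set" where "O_L \<equiv> ints avL"

lemma femb: "field_emb f"
  using fext by (simp add: finite_ext_def)

lemma av_f_le: "avK a \<le> avK b \<Longrightarrow> avL (f a) \<le> avL (f b)"
  unfolding av_f by (rule powr_mono2) (use s_pos K.av_nonneg in auto)

lemma av_f_less: "avK a < avK b \<Longrightarrow> avL (f a) < avL (f b)"
  unfolding av_f by (rule powr_less_mono2) (use s_pos K.av_nonneg in auto)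

lemma av_f_le_iff: "avL (f a) \<le> avL (f b) \<longleftrightarrow> avK a \<le> avK b"
  using av_f_le av_f_less[of b a] by force

lemma av_f_less_iff: "avL (f a) < avL (f b) \<longleftrightarrow> avK a < avK b"
  using av_f_less av_f_le[of b a] by force

lemma f_mem_ints_iff: "f a \<in> O_L \<longleftrightarrow> a \<in> O_K"
  using av_f_le_iff[of a 1] by (simp add: L.mem_ints_iff K.mem_ints_iff field_emb_1[OF femb])

lemma av_f_less_1_iff: "avL (f a) < 1 \<longleftrightarrow> avK a < 1"
  using av_f_less_iff[of a 1] by (simp add: field_emb_1[OF femb])

lemma p_nonzero: "p \<noteq> 0"
  using av_p K.c_pos by auto

lemma p_ints: "p \<in> O_K"
  using av_p K.c_less_1 by (simp add: K.mem_ints_iff)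

lemma f_p_nonzero: "f p \<noteq> 0"
  using p_nonzero field_emb_eq_0_iff[OF femb] by simp

lemma av_f_p_less_1: "avL (f p) < 1"
  using av_f_less_1_iff av_p K.c_less_1 by simp

definition ram_index :: nat where
  "ram_index = (SOME e. 0 < e \<and> avL (f p) = cL ^ e)"

lemma ram_index: "0 < ram_index \<and> avL (f p) = cL ^ ram_index"
proof -
  obtain k where k: "avL (f p) = cL powi k" using L.av_eq_c_powi[OF f_p_nonzero] by blast
  then have "0 < k" using av_f_p_less_1 L.c_powi_less_1_iff by simp
  then have "0 < nat k \<and> avL (f p) = cL ^ nat k" using k by (simp add: power_int_def)
  then show ?thesis unfolding ram_index_def by (rule someI)
qed

lemma av_f_eq_c_powi:
  assumes "a \<noteq> 0"
  shows "\<exists>k::int. avK a = cK powi k \<and> avL (f a) = cL powi (int ram_index * k)"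
proof -
  obtain k where k: "avK a = cK powi k" using K.av_eq_c_powi[OF assms] by blast
  have "avL (f a) = (cK powr real_of_int k) powr s"
    unfolding av_f k using powr_real_of_int'[of cK k] K.c_pos by simp
  also have "\<dots> = avL (f p) powr real_of_int k"
    by (simp add: av_f av_p powr_powr mult.commute)
  also have "\<dots> = (cL powi int ram_index) powi k"
    using powr_real_of_int'[of "avL (f p)" k] L.av_pos[OF f_p_nonzero] ram_index L.c_pos
    by (simp add: power_int_of_nat)
  also have "\<dots> = cL powi (int ram_index * k)" by (simp add: power_int_mult)
  finally show ?thesis using k by blast
qed

text \<open>\<open>u 0, \<dots>, u (F - 1)\<close> are integral and their residues are linearly independent over the
  residue field of \<open>K\<close>.\<close>
definition residually_independent :: "(nat \<Rightarrow> 'l) \<Rightarrow> nat \<Rightarrow> bool" where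
  "residually_independent u F \<longleftrightarrow> (\<forall>i<F. u i \<in> O_L) \<and>
     (\<forall>a. (\<forall>i<F. a i \<in> O_K) \<longrightarrow> avL (\<Sum>i<F. f (a i) * u i) < 1 \<longrightarrow> (\<forall>i<F. avK (a i) < 1))"

lemma residually_independent_coeff_le:
  assumes u: "residually_independent u F" and i0: "i0 < F"
  shows "avL (f (a i0)) \<le> avL (\<Sum>i<F. f (a i) * u i)"
proof (rule ccontr)
  let ?S = "\<Sum>i<F. f (a i) * u i"
  assume "\<not> ?thesis"
  then have less: "avL ?S < avL (f (a i0))" by simp
  obtain i1 where i1: "i1 < F" "\<forall>i<F. avK (a i) \<le> avK (a i1)"
    using finite_has_max[of "{..<F}" "\<lambda>i. avK (a i)"] i0 by auto
  have le: "avL (f (a i0)) \<le> avL (f (a i1))" using i1 i0 av_f_le by simp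
  then have pos: "0 < avL (f (a i1))" using less L.av_nonneg[of ?S] by linarith
  then have a1: "a i1 \<noteq> 0" using field_emb_0[OF femb] by auto
  \<comment> \<open>dividing by a coefficient of largest absolute value gives integral coefficients, one a unit\<close>
  define b where "b i = a i / a i1" for i
  have "\<forall>i<F. b i \<in> O_K" using i1 a1 K.divide_in_ints by (simp add: b_def)
  moreover have "(\<Sum>i<F. f (b i) * u i) = ?S / f (a i1)"
    by (simp add: b_def field_emb_divide[OF femb] sum_divide_distrib)
  moreover have "avL (?S / f (a i1)) < 1" using less le pos by (simp add: L.av_divide)
  ultimately have "avK (b i1) < 1" using u i1 unfolding residually_independent_def by auto
  then show False using a1 by (simp add: b_def)
qed

lemma residually_independent_av_sum:
  assumes u: "residually_independent u F" and F: "0 < F"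
  shows "\<exists>i1<F. avL (\<Sum>i<F. f (a i) * u i) = avL (f (a i1))"
proof -
  obtain i1 where i1: "i1 < F" "\<forall>i<F. avK (a i) \<le> avK (a i1)"
    using finite_has_max[of "{..<F}" "\<lambda>i. avK (a i)"] F by auto
  have "avL (\<Sum>i<F. f (a i) * u i) \<le> avL (f (a i1))"
  proof (rule L.av_sum_le[OF L.av_nonneg])
    fix i assume "i \<in> {..<F}"
    then have "avL (u i) \<le> 1" "avL (f (a i)) \<le> avL (f (a i1))"
      using u i1 av_f_le by (auto simp: residually_independent_def L.mem_ints_iff)
    then show "avL (f (a i) * u i) \<le> avL (f (a i1))"
      using L.av_nonneg[of "f (a i)"] L.av_nonneg[of "u i"]
      by (simp add: L.av_mult mult_le_one order_trans[OF mult_left_le])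
  qed
  then show ?thesis using residually_independent_coeff_le[OF u i1(1), of a] i1(1) by force
qed

lemma residually_independent_le_ext_degree:
  assumes u: "residually_independent u F"
  shows "F \<le> ext_degree f"
proof -
  have "\<forall>i<F. a i = 0" if "(\<Sum>i<F. f (a i) * u i) = 0" for a
    using residually_independent_coeff_le[OF u, of _ a] that L.av_nonneg L.av_eq_0_iff
      field_emb_eq_0_iff[OF femb] by (metis L.av_0 order_antisym)
  then have "inj_on u {..<F} \<and> module.independent (ext_scale f) (u ` {..<F})"
    by (intro independent_if_trivial_relations[OF femb]) auto
  then show ?thesis
    using independent_card_le_ext_degree[OF fext, of "u ` {..<F}"] card_image by fastforce
qed

lemma residually_independent_extend:
  assumes u: "residually_independent u F" and y: "y \<in> O_L"
    and far: "\<And>a. \<forall>i<F. a i \<in> O_K \<Longrightarrow> \<not> avL (y - (\<Sum>i<F. f (a i) * u i)) < 1"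
  shows "residually_independent (u(F := y)) (Suc F)"
  unfolding residually_independent_def
proof (intro conjI allI impI)
  let ?u = "u(F := y)"
  show "?u i \<in> O_L" if "i < Suc F" for i
    using that u y by (auto simp: residually_independent_def less_Suc_eq)
  fix a i assume a: "\<forall>i<Suc F. a i \<in> O_K" and small: "avL (\<Sum>i<Suc F. f (a i) * ?u i) < 1"
    and i: "i < Suc F"
  have split: "(\<Sum>i<Suc F. f (a i) * ?u i) = (\<Sum>i<F. f (a i) * u i) + f (a F) * y"
    by (simp add: sum.lessThan_Suc)
  show "avK (a i) < 1"
  proof (cases "avK (a F) < 1")
    case True
    have "avL (f (a F)) < 1" "avL y \<le> 1"
      using True av_f_less_1_iff y by (simp_all add: L.mem_ints_iff)
    then have "avL (f (a F) * y) < 1" using L.av_nonneg[of "f (a F)"] L.av_nonneg[of y]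
      by (simp add: L.av_mult) (meson le_less_trans mult_left_le)
    then have "avL ((\<Sum>i<Suc F. f (a i) * ?u i) - f (a F) * y) < 1"
      using small L.av_diff[of "\<Sum>i<Suc F. f (a i) * ?u i" "f (a F) * y"] by simp
    then have "\<forall>i<F. avK (a i) < 1" using u a split unfolding residually_independent_def by simp
    then show ?thesis using True i less_Suc_eq by auto
  next
    case False
    moreover have "avK (a F) \<le> 1" using a by (simp add: K.mem_ints_iff)
    ultimately have aF: "avK (a F) = 1" by simp
    then have aF0: "a F \<noteq> 0" by auto
    define b where "b i = - a i / a F" for i
    have b: "\<forall>i<F. b i \<in> O_K"
      using a aF K.divide_in_ints[OF aF0] by (simp add: b_def K.mem_ints_iff)
    have "y - (\<Sum>i<F. f (b i) * u i) = (\<Sum>i<Suc F. f (a i) * ?u i) / f (a F)"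
    proof -
      have "f (a F) \<noteq> 0" using aF0 field_emb_eq_0_iff[OF femb] by simp
      moreover have "(\<Sum>i<F. f (b i) * u i) = - (\<Sum>i<F. f (a i) * u i) / f (a F)"
        by (simp add: b_def field_emb_divide[OF femb] field_emb_minus[OF femb]
            sum_divide_distrib sum_negf)
      ultimately show ?thesis using split by (simp add: field_simps)
    qed
    moreover have "avL (f (a F)) = 1" using aF av_f by simp
    ultimately have "avL (y - (\<Sum>i<F. f (b i) * u i)) < 1" using small by (simp add: L.av_divide)
    then show ?thesis using far[OF b] by blast
  qed
qed

definition res_degree :: nat where
  "res_degree = (GREATEST F. \<exists>u. residually_independent u F)"

definition res_basis :: "nat \<Rightarrow> 'l" where
  "res_basis = (SOME u. residually_independent u res_degree)"

lemma residually_independent_res_basis: "residually_independent res_basis res_degree"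
proof -
  have "\<exists>u. residually_independent u res_degree" unfolding res_degree_def
    by (rule GreatestI_nat[of _ 0 "ext_degree f"])
      (auto simp: residually_independent_def intro: residually_independent_le_ext_degree)
  then show ?thesis unfolding res_basis_def by (rule someI_ex)
qed

lemma res_basis_ints: "i < res_degree \<Longrightarrow> res_basis i \<in> O_L"
  using residually_independent_res_basis by (simp add: residually_independent_def)

lemma res_basis_approx:
  assumes y: "y \<in> O_L"
  shows "\<exists>a. (\<forall>i<res_degree. a i \<in> O_K) \<and> avL (y - (\<Sum>i<res_degree. f (a i) * res_basis i)) < 1"
proof (rule ccontr)
  assume "\<not> ?thesis"
  then have "residually_independent (res_basis(res_degree := y)) (Suc res_degree)"
    using residually_independent_extend[OF residually_independent_res_basis y] by blast
  then have "Suc res_degree \<le> res_degree"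
    unfolding res_degree_def
    by (intro Greatest_le_nat[of _ _ "ext_degree f"])
      (auto intro: residually_independent_le_ext_degree)
  then show False by simp
qed

definition unif_L :: 'l where
  "unif_L = (SOME \<pi>. avL \<pi> = cL)"

lemma av_unif_L: "avL unif_L = cL"
  unfolding unif_L_def using L.ex_uniformizer by (rule someI_ex)

lemma unif_L_nonzero: "unif_L \<noteq> 0"
  using av_unif_L L.c_pos by auto

lemma unif_L_ints: "unif_L \<in> O_L"
  using av_unif_L L.c_less_1 by (simp add: L.mem_ints_iff)

text \<open>The basis \<open>u_i \<pi>_L^j\<close> (\<open>i < f\<close>, \<open>j < e\<close>) of \<open>O_L\<close> over \<open>O_K\<close>, with \<open>f = res_degree\<close>,
  \<open>e = ram_index\<close>, \<open>u_i = res_basis i\<close> and \<open>\<pi>_L = unif_L\<close>.\<close>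
definition basis_idx :: "(nat \<times> nat) set" where
  "basis_idx = {..<res_degree} \<times> {..<ram_index}"

definition basis_elt :: "nat \<times> nat \<Rightarrow> 'l" where
  "basis_elt k = res_basis (fst k) * unif_L ^ snd k"

definition basis_comb :: "(nat \<times> nat \<Rightarrow> 'k) \<Rightarrow> 'l" where
  "basis_comb a = (\<Sum>k\<in>basis_idx. f (a k) * basis_elt k)"

lemma finite_basis_idx: "finite basis_idx"
  by (simp add: basis_idx_def)

lemma basis_elt_ints: "k \<in> basis_idx \<Longrightarrow> basis_elt k \<in> O_L"
  unfolding basis_elt_def basis_idx_def
  using res_basis_ints unif_L_ints subring_mult[OF L.subring_ints] subring_power[OF L.subring_ints]
  by auto

lemma basis_comb_layers:
  "basis_comb a = (\<Sum>j<ram_index. (\<Sum>i<res_degree. f (a (i, j)) * res_basis i) * unif_L ^ j)"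
proof -
  have "basis_comb a
      = (\<Sum>(i, j)\<in>{..<res_degree} \<times> {..<ram_index}. f (a (i, j)) * (res_basis i * unif_L ^ j))"
    unfolding basis_comb_def basis_idx_def basis_elt_def by (intro sum.cong) auto
  also have "\<dots> = (\<Sum>j<ram_index. \<Sum>i<res_degree. f (a (i, j)) * (res_basis i * unif_L ^ j))"
    by (simp add: sum.cartesian_product[symmetric] sum.swap[of _ "{..<ram_index}"])
  also have "\<dots> = (\<Sum>j<ram_index. (\<Sum>i<res_degree. f (a (i, j)) * res_basis i) * unif_L ^ j)"
    by (simp add: sum_distrib_right mult.assoc)
  finally show ?thesis .
qed

lemma basis_comb_add: "basis_comb (\<lambda>k. a k + b k) = basis_comb a + basis_comb b"
  by (simp add: basis_comb_def field_emb_add[OF femb] distrib_right sum.distrib)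

lemma basis_comb_diff: "basis_comb (\<lambda>k. a k - b k) = basis_comb a - basis_comb b"
  by (simp add: basis_comb_def field_emb_diff[OF femb] left_diff_distrib sum_subtractf)

lemma basis_comb_scale: "f c * basis_comb a = basis_comb (\<lambda>k. c * a k)"
  by (simp add: basis_comb_def field_emb_mult[OF femb] sum_distrib_left mult.assoc)

lemma basis_comb_zero: "basis_comb (\<lambda>k. 0) = 0"
  by (simp add: basis_comb_def field_emb_0[OF femb])

lemma basis_comb_cong: "(\<And>k. k \<in> basis_idx \<Longrightarrow> a k = b k) \<Longrightarrow> basis_comb a = basis_comb b"
  unfolding basis_comb_def by (intro sum.cong) auto

lemma basis_comb_sum: "basis_comb (\<lambda>k. \<Sum>j\<in>J. g j k) = (\<Sum>j\<in>J. basis_comb (g j))"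
  unfolding basis_comb_def
  by (simp add: field_emb_sum[OF femb] sum_distrib_right sum.swap[of _ basis_idx])

lemma basis_comb_ints: "(\<And>k. k \<in> basis_idx \<Longrightarrow> a k \<in> O_K) \<Longrightarrow> basis_comb a \<in> O_L"
  unfolding basis_comb_def
  by (intro add_subgroup_sum[OF L.add_subgroup_ints] subring_mult[OF L.subring_ints])
    (auto simp: f_mem_ints_iff basis_elt_ints)

text \<open>The nonzero layers of a basis combination have absolute values in distinct classes
  modulo the value group of \<open>K\<close>; hence no cancellation occurs between layers.\<close>
lemma av_layer:
  assumes "avL ((\<Sum>i<res_degree. f (b i) * res_basis i) * unif_L ^ j) \<noteq> 0"
  shows "\<exists>k::int. avL ((\<Sum>i<res_degree. f (b i) * res_basis i) * unif_L ^ j)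
    = cL powi (int ram_index * k + int j)"
proof -
  let ?S = "\<Sum>i<res_degree. f (b i) * res_basis i"
  have "?S \<noteq> 0" using assms by auto
  then have "0 < res_degree" by (cases res_degree) auto
  then obtain i1 where i1: "avL ?S = avL (f (b i1))"
    using residually_independent_av_sum[OF residually_independent_res_basis] by blast
  then have "b i1 \<noteq> 0" using \<open>?S \<noteq> 0\<close> field_emb_0[OF femb] L.av_eq_0_iff by fastforce
  then obtain k where k: "avL (f (b i1)) = cL powi (int ram_index * k)"
    using av_f_eq_c_powi by blast
  have "avL (?S * unif_L ^ j) = cL powi (int ram_index * k) * cL powi (int j)"
    using i1 k by (simp add: L.av_mult L.av_power av_unif_L power_int_of_nat)
  also have "\<dots> = cL powi (int ram_index * k + int j)" using L.c_pos by (simp add: power_int_add)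
  finally show ?thesis by blast
qed

lemma av_coeff_le_basis_comb:
  assumes k: "k \<in> basis_idx"
  shows "avL (f (a k)) * cL ^ snd k \<le> avL (basis_comb a)"
proof -
  obtain i j where ij: "k = (i, j)" "i < res_degree" "j < ram_index"
    using k by (auto simp: basis_idx_def)
  define X where "X j = (\<Sum>i<res_degree. f (a (i, j)) * res_basis i) * unif_L ^ j" for j
  have "avL (f (a (i, j))) \<le> avL (\<Sum>i<res_degree. f (a (i, j)) * res_basis i)"
    using residually_independent_coeff_le[OF residually_independent_res_basis ij(2),
        of "\<lambda>i. a (i, j)"] by simp
  then have "avL (f (a (i, j))) * cL ^ j \<le> avL (X j)"
    using L.c_pos by (simp add: X_def L.av_mult L.av_power av_unif_L mult_right_mono)
  also have "avL (X j) \<le> avL (sum X {..<ram_index})"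
  proof (rule L.av_term_le_sum)
    fix j1 j2
    assume j12: "j1 \<in> {..<ram_index}" "j2 \<in> {..<ram_index}" "j1 \<noteq> j2" "avL (X j1) = avL (X j2)"
    show "avL (X j1) = 0"
    proof (rule ccontr)
      assume nz: "avL (X j1) \<noteq> 0"
      then obtain k1 where k1: "avL (X j1) = cL powi (int ram_index * k1 + int j1)"
        using av_layer[of "\<lambda>i. a (i, j1)" j1] unfolding X_def by blast
      obtain k2 where k2: "avL (X j2) = cL powi (int ram_index * k2 + int j2)"
        using nz j12(4) av_layer[of "\<lambda>i. a (i, j2)" j2] unfolding X_def by auto
      have "int ram_index * k1 + int j1 = int ram_index * k2 + int j2"
        using k1 k2 j12(4) L.c_powi_inj by simp
      then show False using eq_if_same_residue j12 by auto
    qed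
  qed (use ij in simp_all)
  finally show ?thesis using ij by (simp add: basis_comb_layers X_def)
qed

lemma basis_comb_eq_0_imp: "basis_comb a = 0 \<Longrightarrow> k \<in> basis_idx \<Longrightarrow> a k = 0"
  using av_coeff_le_basis_comb[of k a] L.c_pos L.av_nonneg[of "f (a k)"]
    field_emb_eq_0_iff[OF femb] L.av_eq_0_iff
  by (metis L.av_0 mult_le_0_iff order_antisym zero_less_power not_less)

lemma unif_L_digits:
  assumes x: "x \<in> O_L"
  shows "\<exists>a. (\<forall>i<res_degree. \<forall>j<J. a (i, j) \<in> O_K) \<and>
    (x - (\<Sum>j<J. (\<Sum>i<res_degree. f (a (i, j)) * res_basis i) * unif_L ^ j)) / unif_L ^ J \<in> O_L"
proof (induction J)
  case 0
  then show ?case using x by (intro exI[of _ "\<lambda>_. 0"]) simp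
next
  case (Suc J)
  then obtain a where a: "\<forall>i<res_degree. \<forall>j<J. a (i, j) \<in> O_K"
    and rest: "(x - (\<Sum>j<J. (\<Sum>i<res_degree. f (a (i, j)) * res_basis i) * unif_L ^ j))
      / unif_L ^ J \<in> O_L"
    by blast
  let ?P = "\<Sum>j<J. (\<Sum>i<res_degree. f (a (i, j)) * res_basis i) * unif_L ^ j"
  let ?r = "(x - ?P) / unif_L ^ J"
  obtain b where b: "\<forall>i<res_degree. b i \<in> O_K"
    and close: "avL (?r - (\<Sum>i<res_degree. f (b i) * res_basis i)) < 1"
    using res_basis_approx[OF rest] by blast
  define a' where "a' ij = (if snd ij = J then b (fst ij) else a ij)" for ij
  have a': "\<forall>i<res_degree. \<forall>j<Suc J. a' (i, j) \<in> O_K"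
    using a b by (auto simp: a'_def less_Suc_eq)
  have "(\<Sum>j<Suc J. (\<Sum>i<res_degree. f (a' (i, j)) * res_basis i) * unif_L ^ j)
      = ?P + (\<Sum>i<res_degree. f (b i) * res_basis i) * unif_L ^ J"
    by (simp add: sum.lessThan_Suc a'_def)
  then have "(x - (\<Sum>j<Suc J. (\<Sum>i<res_degree. f (a' (i, j)) * res_basis i) * unif_L ^ j))
        / unif_L ^ Suc J
      = (?r - (\<Sum>i<res_degree. f (b i) * res_basis i)) / unif_L"
    using unif_L_nonzero by (simp add: field_simps)
  moreover have "(?r - (\<Sum>i<res_degree. f (b i) * res_basis i)) / unif_L \<in> O_L"
    using L.divide_in_ints[OF unif_L_nonzero] L.av_less_1_imp_le_c[OF close] av_unif_L by simp
  ultimately show ?case using a' by (intro exI[of _ a']) simp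
qed

text \<open>Since \<open>|f p| = |\<pi>_L|^e\<close>, \<open>e\<close> digits in base \<open>\<pi>_L\<close> approximate \<open>x\<close> modulo \<open>f p\<close>.\<close>
lemma basis_comb_approx:
  assumes x: "x \<in> O_L"
  shows "\<exists>a y. (\<forall>k\<in>basis_idx. a k \<in> O_K) \<and> y \<in> O_L \<and> x = basis_comb a + f p * y"
proof -
  obtain a where a: "\<forall>i<res_degree. \<forall>j<ram_index. a (i, j) \<in> O_K"
    and rest: "(x - basis_comb a) / unif_L ^ ram_index \<in> O_L"
    using unif_L_digits[OF x, of ram_index] unfolding basis_comb_layers by blast
  have "avL (unif_L ^ ram_index) = avL (f p)"
    using ram_index by (simp add: L.av_power av_unif_L)
  then have "unif_L ^ ram_index / f p \<in> O_L"
    using f_p_nonzero by (simp add: L.mem_ints_iff L.av_divide L.av_pos)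
  then have "(x - basis_comb a) / unif_L ^ ram_index * (unif_L ^ ram_index / f p) \<in> O_L"
    by (rule subring_mult[OF L.subring_ints rest])
  then have "(x - basis_comb a) / f p \<in> O_L" using unif_L_nonzero by simp
  moreover have "x = basis_comb a + f p * ((x - basis_comb a) / f p)" using f_p_nonzero by simp
  moreover have "\<forall>k\<in>basis_idx. a k \<in> O_K" using a by (auto simp: basis_idx_def)
  ultimately show ?thesis by blast
qed

lemma basis_comb_approx_seq:
  assumes x: "x \<in> O_L"
  shows "\<exists>C. (\<forall>n. \<forall>k\<in>basis_idx. C n k \<in> O_K)
    \<and> (\<forall>n. \<forall>k\<in>basis_idx. avK (C (Suc n) k - C n k) \<le> cK ^ n)
    \<and> (\<forall>n. avL (x - basis_comb (C n)) \<le> avL (f p) ^ n)"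
proof -
  have "\<forall>z. \<exists>a y. z \<in> O_L \<longrightarrow>
      (\<forall>k\<in>basis_idx. a k \<in> O_K) \<and> y \<in> O_L \<and> z = basis_comb a + f p * y"
    using basis_comb_approx by blast
  then obtain A Y where AY: "\<And>z. z \<in> O_L \<Longrightarrow>
      (\<forall>k\<in>basis_idx. A z k \<in> O_K) \<and> Y z \<in> O_L \<and> z = basis_comb (A z) + f p * Y z"
    by metis
  define xs where "xs n = (Y ^^ n) x" for n
  have xs_ints: "xs n \<in> O_L" for n
    by (induction n) (use x AY in \<open>simp_all add: xs_def\<close>)
  have A_ints: "A (xs n) k \<in> O_K" if "k \<in> basis_idx" for n k
    using AY[OF xs_ints] that by blast
  define C where "C n k = (\<Sum>m<n. p ^ m * A (xs m) k)" for n k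
  have remainder: "x = basis_comb (C n) + f p ^ n * xs n" for n
  proof (induction n)
    case 0
    then show ?case using basis_comb_zero by (simp add: C_def xs_def)
  next
    case (Suc n)
    have "xs n = basis_comb (A (xs n)) + f p * xs (Suc n)"
      using AY[OF xs_ints] by (simp add: xs_def)
    then have "f p ^ n * xs n = f p ^ n * (basis_comb (A (xs n)) + f p * xs (Suc n))" by simp
    also have "\<dots> = f p ^ n * basis_comb (A (xs n)) + f p ^ Suc n * xs (Suc n)"
      by (simp add: algebra_simps)
    also have "f p ^ n * basis_comb (A (xs n)) = basis_comb (\<lambda>k. p ^ n * A (xs n) k)"
      using basis_comb_scale[of "p ^ n"] by (simp add: field_emb_power[OF femb])
    finally have "f p ^ n * xs n = basis_comb (\<lambda>k. p ^ n * A (xs n) k) + f p ^ Suc n * xs (Suc n)" .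
    moreover have "C (Suc n) = (\<lambda>k. C n k + p ^ n * A (xs n) k)" by (simp add: C_def fun_eq_iff)
    then have "basis_comb (C (Suc n)) = basis_comb (C n) + basis_comb (\<lambda>k. p ^ n * A (xs n) k)"
      by (simp add: basis_comb_add)
    ultimately show ?case using Suc.IH by simp
  qed
  have "C n k \<in> O_K" if "k \<in> basis_idx" for n k
    unfolding C_def using A_ints[OF that] subring_power[OF K.subring_ints p_ints]
    by (intro add_subgroup_sum[OF K.add_subgroup_ints] subring_mult[OF K.subring_ints])
  moreover have "avK (C (Suc n) k - C n k) \<le> cK ^ n" if "k \<in> basis_idx" for n k
    using A_ints[OF that, of n] K.av_nonneg[of "A (xs n) k"] K.c_pos
    by (simp add: C_def K.av_mult K.av_power av_p K.mem_ints_iff mult_left_le)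
  moreover have "avL (x - basis_comb (C n)) \<le> avL (f p) ^ n" for n
    using remainder[of n] xs_ints[of n] L.av_nonneg[of "xs n"] L.av_nonneg[of "f p"]
    by (simp add: L.av_mult L.av_power L.mem_ints_iff algebra_simps mult_left_le_one_le)
  ultimately show ?thesis by blast
qed

text \<open>The coefficients of the approximations converge in \<open>O_K\<close> by completeness of \<open>K\<close>.\<close>
lemma basis_comb_onto_ints:
  assumes x: "x \<in> O_L"
  shows "\<exists>a. (\<forall>k\<in>basis_idx. a k \<in> O_K) \<and> x = basis_comb a"
proof -
  obtain C where C_ints: "\<forall>n. \<forall>k\<in>basis_idx. C n k \<in> O_K"
    and steps: "\<forall>n. \<forall>k\<in>basis_idx. avK (C (Suc n) k - C n k) \<le> cK ^ n"
    and approx: "\<forall>n. avL (x - basis_comb (C n)) \<le> avL (f p) ^ n"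
    using basis_comb_approx_seq[OF x] by blast
  have "\<exists>l. \<forall>n. avK (C n k - l) \<le> cK ^ n" if k: "k \<in> basis_idx" for k
    by (rule K.complete_limit[OF complete_K]) (use steps k in blast)
  then obtain a where a: "\<And>k n. k \<in> basis_idx \<Longrightarrow> avK (C n k - a k) \<le> cK ^ n" by metis
  have a_ints: "a k \<in> O_K" if k: "k \<in> basis_idx" for k
  proof -
    have "avK (C 0 k) \<le> 1" using C_ints k by (simp add: K.mem_ints_iff)
    then show ?thesis
      using K.av_diff[of "C 0 k" "C 0 k - a k"] a[OF k, of 0] by (simp add: K.mem_ints_iff)
  qed
  have "avL (x - basis_comb a) \<le> avL (f p) ^ n" for n
  proof -
    have "avL (f (C n k - a k) * basis_elt k) \<le> avL (f p) ^ n" if k: "k \<in> basis_idx" for k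
    proof -
      have "avK (C n k - a k) \<le> avK (p ^ n)" using a[OF k] by (simp add: K.av_power av_p)
      then have "avL (f (C n k - a k)) \<le> avL (f (p ^ n))" by (rule av_f_le)
      then have "avL (f (C n k - a k)) \<le> avL (f p) ^ n"
        by (simp add: field_emb_power[OF femb] L.av_power)
      moreover have "avL (basis_elt k) \<le> 1" using basis_elt_ints[OF k] by (simp add: L.mem_ints_iff)
      ultimately show ?thesis using L.av_nonneg[of "f (C n k - a k)"] L.av_nonneg[of "basis_elt k"]
        by (simp add: L.av_mult) (meson mult_left_le order_trans)
    qed
    then have "avL (basis_comb (\<lambda>k. C n k - a k)) \<le> avL (f p) ^ n"
      unfolding basis_comb_def using L.av_nonneg by (intro L.av_sum_le) auto
    then have "avL (basis_comb (C n) - basis_comb a) \<le> avL (f p) ^ n" by (simp add: basis_comb_diff)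
    then show ?thesis
      using L.av_ultra[of "x - basis_comb (C n)" "basis_comb (C n) - basis_comb a"]
        approx[rule_format, of n]
      by simp
  qed
  then have "x - basis_comb a = 0" by (rule L.eq_0_if_av_le_powers[OF av_f_p_less_1])
  then show ?thesis using a_ints by (intro exI[of _ a]) simp
qed

lemma basis_comb_onto: "\<exists>a. y = basis_comb a"
proof -
  obtain m where "f p ^ m * y \<in> O_L"
    using L.power_mult_in_ints[of "{y}" "f p"] av_f_p_less_1 by auto
  then obtain a where a: "f p ^ m * y = basis_comb a" using basis_comb_onto_ints by blast
  have "basis_comb (\<lambda>k. inverse (p ^ m) * a k) = f (inverse (p ^ m)) * basis_comb a"
    by (rule basis_comb_scale[symmetric])
  also have "\<dots> = y"
    using a[symmetric] f_p_nonzero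
    by (simp add: field_emb_inverse[OF femb] field_emb_power[OF femb])
  finally show ?thesis by metis
qed

lemma card_basis_idx: "card basis_idx = ext_degree f"
  by (rule card_basis_eq_ext_degree[OF femb finite_basis_idx])
    (use basis_comb_eq_0_imp basis_comb_onto in \<open>auto simp: basis_comb_def\<close>)

end

section \<open>Injective matrices\<close>

definition vec_scale :: "'a::field \<Rightarrow> ('n \<Rightarrow> 'a) \<Rightarrow> ('n \<Rightarrow> 'a)" where
  "vec_scale c x = (\<lambda>i. c * x i)"

definition unit_vec :: "'n \<Rightarrow> ('n \<Rightarrow> 'a::field)" where
  "unit_vec j = (\<lambda>i. if i = j then 1 else 0)"

lemma sum_fun_apply: "(sum g A) i = sum (\<lambda>j. g j i) A"
  by (induction A rule: infinite_finite_induct) (simp_all add: zero_fun_def plus_fun_def)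

lemma vector_space_vec_scale: "vector_space (vec_scale :: 'a::field \<Rightarrow> ('n \<Rightarrow> 'a) \<Rightarrow> _)"
  unfolding vector_space_def vec_scale_def by (simp add: fun_eq_iff algebra_simps)

lemma unit_vec_expansion: "x = (\<Sum>j\<in>UNIV. vec_scale (x j) (unit_vec j :: 'n::finite \<Rightarrow> 'a::field))"
proof -
  have "(\<Sum>j\<in>UNIV. vec_scale (x j) (unit_vec j)) i = x i" for i
  proof -
    have "(\<Sum>j\<in>UNIV. vec_scale (x j) (unit_vec j)) i = (\<Sum>j\<in>UNIV. x j * unit_vec j i)"
      by (simp add: vec_scale_def sum_fun_apply)
    also have "\<dots> = (\<Sum>j\<in>UNIV. if i = j then x j else 0)"
      by (intro sum.cong) (auto simp: unit_vec_def)
    also have "\<dots> = x i" by (simp add: sum.delta)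
    finally show ?thesis .
  qed
  then show ?thesis by (simp add: fun_eq_iff)
qed

lemma finite_dimensional_vec_scale:
  "finite_dimensional_vector_space (vec_scale :: 'a::field \<Rightarrow> ('n::finite \<Rightarrow> 'a) \<Rightarrow> _)
    (range unit_vec)"
proof -
  interpret V: vector_space "vec_scale :: 'a \<Rightarrow> ('n \<Rightarrow> 'a) \<Rightarrow> _" by (rule vector_space_vec_scale)
  have inj: "inj (unit_vec :: 'n \<Rightarrow> 'n \<Rightarrow> 'a)"
  proof (rule injI)
    fix a b :: 'n assume "unit_vec a = (unit_vec b :: 'n \<Rightarrow> 'a)"
    then have "unit_vec a a = (unit_vec b a :: 'a)" by simp
    then show "a = b" by (simp add: unit_vec_def split: if_splits)
  qed
  have ind: "V.independent (range unit_vec)"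
  proof
    assume dep: "V.dependent (range unit_vec)"
    have fin: "finite (range (unit_vec :: 'n \<Rightarrow> 'n \<Rightarrow> 'a))" by simp
    obtain u where u: "\<exists>v\<in>range (unit_vec :: 'n \<Rightarrow> 'n \<Rightarrow> 'a). u v \<noteq> 0"
        "(\<Sum>v\<in>range (unit_vec :: 'n \<Rightarrow> 'n \<Rightarrow> 'a). vec_scale (u v) v) = 0"
      using V.dependent_finite[OF fin] dep by blast
    have "(\<Sum>j\<in>UNIV. vec_scale (u (unit_vec j)) (unit_vec j :: 'n \<Rightarrow> 'a)) = 0"
      using u(2) sum.reindex[OF inj, of "\<lambda>v. vec_scale (u v) v"] by simp
    then have "(\<lambda>j. u (unit_vec j)) = (\<Sum>j\<in>UNIV. vec_scale (u (unit_vec j)) (unit_vec j))"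
      using unit_vec_expansion[of "\<lambda>j. u (unit_vec j)"] by simp
    then have "\<forall>j. u (unit_vec j) = 0"
      using \<open>(\<Sum>j\<in>UNIV. vec_scale (u (unit_vec j)) (unit_vec j)) = 0\<close> by (metis zero_fun_def)
    then show False using u(1) by auto
  qed
  have sp: "V.span (range unit_vec) = UNIV"
  proof -
    have "x \<in> V.span (range unit_vec)" for x
    proof -
      have "(\<Sum>j\<in>UNIV. vec_scale (x j) (unit_vec j)) \<in> V.span (range unit_vec)"
        by (intro V.span_sum V.span_scale V.span_base) simp
      then show ?thesis using unit_vec_expansion[of x] by simp
    qed
    then show ?thesis by blast
  qed
  show ?thesis
    by (rule finite_dimensional_vector_space.intro[OF vector_space_vec_scale])
       (unfold_locales, simp_all add: ind sp)
qed

lemma mat_vec_inj_surj: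
  fixes U :: "'n::finite \<Rightarrow> 'n \<Rightarrow> 'a::field"
  assumes "inj (mat_vec U)"
  shows "surj (mat_vec U)"
proof -
  interpret F: finite_dimensional_vector_space "vec_scale :: 'a \<Rightarrow> ('n \<Rightarrow> 'a) \<Rightarrow> _" "range unit_vec"
    by (rule finite_dimensional_vec_scale)
  have lin: "Vector_Spaces.linear vec_scale vec_scale (mat_vec U)"
    unfolding Vector_Spaces.linear_iff using vector_space_vec_scale
    by (simp add: mat_vec_add vec_scale_def mat_vec_scale)
  show ?thesis by (rule F.linear_inj_imp_surj[OF lin assms])
qed

context discrete_abs_value
begin

text \<open>A nonzero kernel vector, divided by a coordinate of largest absolute value, lies in \<open>O^n\<close>.\<close>
lemma inj_on_vecs_ints_imp_inj:
  fixes U :: "'n::finite \<Rightarrow> 'n \<Rightarrow> 'a"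
  assumes inj: "inj_on (mat_vec U) (vecs (ints av))"
  shows "inj (mat_vec U)"
proof -
  have "x = 0" if U0: "mat_vec U x = 0" for x
  proof (rule ccontr)
    assume "x \<noteq> 0"
    obtain i0 where i0: "\<forall>i. av (x i) \<le> av (x i0)"
      using finite_has_max[of UNIV "\<lambda>i. av (x i)"] by auto
    obtain i1 where "x i1 \<noteq> 0" using \<open>x \<noteq> 0\<close> by (auto simp: fun_eq_iff)
    then have pos: "0 < av (x i0)" using av_pos i0 by (meson less_le_trans)
    define y where "y = (\<lambda>i. inverse (x i0) * x i)"
    have "av (y i) \<le> 1" for i
      using i0[rule_format, of i] pos by (simp add: y_def field_simps av_divide)
    then have "y \<in> vecs (ints av)" by (simp add: vecs_def mem_ints_iff)
    moreover have "mat_vec U y = mat_vec U 0"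
      using U0 by (simp add: y_def mat_vec_scale mat_vec_zero fun_eq_iff)
    moreover have "0 \<in> vecs (ints av)"
      by (rule add_subgroup_zero[OF add_subgroup_vecs[OF add_subgroup_ints]])
    ultimately have "y = 0" using inj by (meson inj_onD)
    then show False using pos by (auto simp: y_def fun_eq_iff)
  qed
  then show ?thesis
  proof (intro injI)
    fix a b assume "mat_vec U a = mat_vec U b"
    then have "mat_vec U (a - b) = 0" by (simp add: mat_vec_diff)
    then show "a = b" using \<open>\<And>x. mat_vec U x = 0 \<Longrightarrow> x = 0\<close> by fastforce
  qed
qed

text \<open>If \<open>U\<close> is injective, the columns of \<open>U\<^sup>-\<^sup>1\<close> have bounded denominators, so a power of
  any \<open>t\<close> with \<open>|t| < 1\<close> maps \<open>O^n\<close> into \<open>U O^n\<close>.\<close>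
lemma power_smul_vecs_in_image:
  fixes U :: "'n::finite \<Rightarrow> 'n \<Rightarrow> 'a"
  assumes inj: "inj_on (mat_vec U) (vecs (ints av))" and t: "av t < 1"
  shows "\<exists>m. \<forall>z\<in>vecs (ints av). (\<lambda>i. t ^ m * z i) \<in> mat_vec U ` vecs (ints av)"
proof -
  have "surj (mat_vec U)" by (rule mat_vec_inj_surj[OF inj_on_vecs_ints_imp_inj[OF inj]])
  then have "\<forall>j. \<exists>y. mat_vec U y = unit_vec j" by (metis surj_def)
  then obtain Y where Y: "\<And>j. mat_vec U (Y j) = unit_vec j" by metis
  have "finite (range (case_prod Y))" by simp
  then obtain m where m: "\<forall>y\<in>range (case_prod Y). t ^ m * y \<in> ints av"
    using power_mult_in_ints t by blast
  have "(\<lambda>i. t ^ m * z i) \<in> mat_vec U ` vecs (ints av)" if z: "z \<in> vecs (ints av)" for z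
  proof -
    define v where "v = (\<lambda>i. \<Sum>j\<in>UNIV. z j * (t ^ m * Y j i))"
    have "v \<in> vecs (ints av)"
      unfolding v_def vecs_def
    proof (intro CollectI allI add_subgroup_sum[OF add_subgroup_ints])
      fix i j
      have "Y j i \<in> range (case_prod Y)" using rangeI[of "case_prod Y" "(j, i)"] by simp
      then have "t ^ m * Y j i \<in> ints av" using m by blast
      then show "z j * (t ^ m * Y j i) \<in> ints av"
        using subring_mult[OF subring_ints] z by (simp add: vecs_def)
    qed
    moreover have "mat_vec U v = (\<lambda>i. t ^ m * z i)"
    proof
      fix i'
      have "mat_vec U v i' = (\<Sum>i\<in>UNIV. \<Sum>j\<in>UNIV. U i' i * (z j * (t ^ m * Y j i)))"
        by (simp add: mat_vec_def v_def sum_distrib_left)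
      also have "\<dots> = (\<Sum>j\<in>UNIV. \<Sum>i\<in>UNIV. U i' i * (z j * (t ^ m * Y j i)))"
        by (rule sum.swap)
      also have "\<dots> = (\<Sum>j\<in>UNIV. (z j * t ^ m) * mat_vec U (Y j) i')"
        by (simp add: mat_vec_def sum_distrib_left algebra_simps)
      also have "\<dots> = (\<Sum>j\<in>UNIV. (z j * t ^ m) * unit_vec j i')" by (simp only: Y)
      also have "\<dots> = (\<Sum>j\<in>UNIV. if j = i' then z j * t ^ m else 0)"
        by (intro sum.cong refl) (simp add: unit_vec_def)
      also have "\<dots> = t ^ m * z i'" by (simp add: sum.delta' mult.commute)
      finally show "mat_vec U v i' = t ^ m * z i'" .
    qed
    ultimately show ?thesis by (metis image_eqI)
  qed
  then show ?thesis by blast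
qed

end

section \<open>Base change along the integral basis\<close>

lemma prodset_image:
  assumes "g 0 = 0" "0 \<in> A"
  shows "prodset I (g ` A) = (\<lambda>X k. g (X k)) ` prodset I A"
proof
  show "(\<lambda>X k. g (X k)) ` prodset I A \<subseteq> prodset I (g ` A)"
    using assms(1) by (auto simp: prodset_def)
  show "prodset I (g ` A) \<subseteq> (\<lambda>X k. g (X k)) ` prodset I A"
  proof
    fix Y assume "Y \<in> prodset I (g ` A)"
    then have "\<forall>k\<in>I. \<exists>x\<in>A. Y k = g x" by (auto simp: prodset_def)
    then obtain X0 where X0: "\<And>k. k \<in> I \<Longrightarrow> X0 k \<in> A \<and> Y k = g (X0 k)" by metis
    define X where "X k = (if k \<in> I then X0 k else 0)" for k
    have "X \<in> prodset I A" using X0 by (auto simp: X_def prodset_def)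
    moreover have "Y = (\<lambda>k. g (X k))"
      using X0 \<open>Y \<in> prodset I (g ` A)\<close> assms(1) by (auto simp: X_def prodset_def fun_eq_iff)
    ultimately show "Y \<in> (\<lambda>X k. g (X k)) ` prodset I A" by blast
  qed
qed

lemma prodset_sums:
  fixes A B :: "'g::ab_group_add set"
  assumes "0 \<in> A" "0 \<in> B"
  shows "prodset I {a + b |a b. a \<in> A \<and> b \<in> B} = {X + Y |X Y. X \<in> prodset I A \<and> Y \<in> prodset I B}"
proof
  show "{X + Y |X Y. X \<in> prodset I A \<and> Y \<in> prodset I B} \<subseteq> prodset I {a + b |a b. a \<in> A \<and> b \<in> B}"
    by (force simp: prodset_def)
  show "prodset I {a + b |a b. a \<in> A \<and> b \<in> B} \<subseteq> {X + Y |X Y. X \<in> prodset I A \<and> Y \<in> prodset I B}"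
  proof
    fix Z assume Z: "Z \<in> prodset I {a + b |a b. a \<in> A \<and> b \<in> B}"
    then have "\<forall>k\<in>I. \<exists>a b. a \<in> A \<and> b \<in> B \<and> Z k = a + b" unfolding prodset_def by blast
    then obtain X0 Y0 where XY: "\<And>k. k \<in> I \<Longrightarrow> X0 k \<in> A \<and> Y0 k \<in> B \<and> Z k = X0 k + Y0 k" by metis
    define X where "X k = (if k \<in> I then X0 k else 0)" for k
    define Y where "Y k = (if k \<in> I then Y0 k else 0)" for k
    have "X \<in> prodset I A" "Y \<in> prodset I B" using XY assms by (auto simp: X_def Y_def prodset_def)
    moreover have "Z = X + Y" using XY Z by (auto simp: X_def Y_def prodset_def fun_eq_iff)
    ultimately show "Z \<in> {X + Y |X Y. X \<in> prodset I A \<and> Y \<in> prodset I B}" by blast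
  qed
qed

context local_extension
begin

text \<open>The isomorphism \<open>(O_K^n)^[L:K] \<cong> O_L^n\<close> given by the integral basis.\<close>
definition vec_comb :: "(nat \<times> nat \<Rightarrow> 'n::finite \<Rightarrow> 'k) \<Rightarrow> ('n \<Rightarrow> 'l)" where
  "vec_comb X = (\<lambda>i. basis_comb (\<lambda>k. X k i))"

lemma vec_comb_diff: "vec_comb (X - Y) = vec_comb X - vec_comb Y"
  unfolding vec_comb_def using basis_comb_diff by (simp add: fun_eq_iff)

lemma vec_comb_add: "vec_comb (X + Y) = vec_comb X + vec_comb Y"
  unfolding vec_comb_def using basis_comb_add by (simp add: fun_eq_iff)

lemma vec_comb_mat_vec: "vec_comb (\<lambda>k. mat_vec T (X k)) = mat_vec (\<lambda>i j. f (T i j)) (vec_comb X)"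
proof
  fix i
  have "mat_vec (\<lambda>i j. f (T i j)) (vec_comb X) i = (\<Sum>j\<in>UNIV. basis_comb (\<lambda>k. T i j * X k j))"
    by (simp add: mat_vec_def vec_comb_def basis_comb_scale)
  also have "\<dots> = basis_comb (\<lambda>k. \<Sum>j\<in>UNIV. T i j * X k j)" by (rule basis_comb_sum[symmetric])
  finally show "vec_comb (\<lambda>k. mat_vec T (X k)) i = mat_vec (\<lambda>i j. f (T i j)) (vec_comb X) i"
    by (simp add: mat_vec_def vec_comb_def)
qed

lemma vec_comb_smul: "vec_comb (\<lambda>k i. t * X k i) = (\<lambda>i. f t * vec_comb X i)"
  by (simp add: vec_comb_def basis_comb_scale)

lemma vec_comb_inj_on: "inj_on vec_comb (prodset basis_idx (vecs O_K))"
proof (rule inj_onI)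
  fix X Y assume XY: "X \<in> prodset basis_idx (vecs O_K)" "Y \<in> prodset basis_idx (vecs O_K)"
    and "vec_comb X = vec_comb Y"
  then have "basis_comb (\<lambda>k. X k i - Y k i) = 0" for i
    using vec_comb_diff[of X Y] by (simp add: vec_comb_def fun_eq_iff)
  then have eq: "X k i = Y k i" if "k \<in> basis_idx" for k i
    using basis_comb_eq_0_imp that by fastforce
  show "X = Y"
  proof
    fix k show "X k = Y k"
    proof (cases "k \<in> basis_idx")
      case True
      then show ?thesis using eq by (intro ext) blast
    next
      case False
      then show ?thesis
        using prodset_memD(2)[OF XY(1) False] prodset_memD(2)[OF XY(2) False] by simp
    qed
  qed
qed

lemma vec_comb_image_vecs: "vec_comb ` prodset basis_idx (vecs O_K) = vecs O_L"
proof
  show "vec_comb ` prodset basis_idx (vecs O_K) \<subseteq> vecs O_L"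
  proof clarify
    fix X assume X: "X \<in> prodset basis_idx (vecs O_K)"
    have "X k i \<in> O_K" if "k \<in> basis_idx" for k i
      using prodset_memD(1)[OF X that] by (simp add: vecs_def)
    then show "vec_comb X \<in> vecs O_L" by (simp add: vec_comb_def vecs_def basis_comb_ints)
  qed
  show "vecs O_L \<subseteq> vec_comb ` prodset basis_idx (vecs O_K)"
  proof
    fix z assume "z \<in> vecs O_L"
    then have "\<forall>i. \<exists>a. (\<forall>k\<in>basis_idx. a k \<in> O_K) \<and> z i = basis_comb a"
      using basis_comb_onto_ints by (auto simp: vecs_def)
    then obtain a where a: "\<And>i. (\<forall>k\<in>basis_idx. a i k \<in> O_K) \<and> z i = basis_comb (a i)" by metis
    define X where "X k = (if k \<in> basis_idx then (\<lambda>i. a i k) else 0)" for k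
    have "X \<in> prodset basis_idx (vecs O_K)"
      using a by (intro prodset_memI) (simp_all add: X_def vecs_def)
    moreover have "vec_comb X = z"
      using a by (auto simp: vec_comb_def X_def fun_eq_iff intro: basis_comb_cong)
    ultimately show "z \<in> vec_comb ` prodset basis_idx (vecs O_K)" by blast
  qed
qed

lemma vec_comb_prodset_sum_set:
  assumes "0 \<in> M" "0 \<in> N"
  shows "vec_comb ` prodset basis_idx (sum_set M N)
    = sum_set (vec_comb ` prodset basis_idx M) (vec_comb ` prodset basis_idx N)"
proof -
  let ?M = "prodset basis_idx M" and ?N = "prodset basis_idx N"
  have "vec_comb ` {X + Y |X Y. X \<in> ?M \<and> Y \<in> ?N}
      \<subseteq> {x + y |x y. x \<in> vec_comb ` ?M \<and> y \<in> vec_comb ` ?N}"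
    using vec_comb_add by blast
  moreover have "{x + y |x y. x \<in> vec_comb ` ?M \<and> y \<in> vec_comb ` ?N}
      \<subseteq> vec_comb ` {X + Y |X Y. X \<in> ?M \<and> Y \<in> ?N}"
    by (force simp: vec_comb_add[symmetric])
  ultimately show ?thesis unfolding sum_set_eq prodset_sums[OF assms] by blast
qed

lemma vec_comb_prodset_mat_image:
  "vec_comb ` prodset basis_idx (mat_vec T ` vecs O_K) = mat_vec (\<lambda>i j. f (T i j)) ` vecs O_L"
proof -
  have "prodset basis_idx (mat_vec T ` vecs O_K)
      = (\<lambda>X k. mat_vec T (X k)) ` prodset basis_idx (vecs O_K)"
    by (rule prodset_image)
      (simp_all add: mat_vec_zero add_subgroup_zero[OF add_subgroup_vecs[OF K.add_subgroup_ints]])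
  then have "vec_comb ` prodset basis_idx (mat_vec T ` vecs O_K)
      = (\<lambda>X. vec_comb (\<lambda>k. mat_vec T (X k))) ` prodset basis_idx (vecs O_K)"
    by (simp only: image_image)
  also have "\<dots> = mat_vec (\<lambda>i j. f (T i j)) ` vec_comb ` prodset basis_idx (vecs O_K)"
    by (simp only: vec_comb_mat_vec image_image)
  finally show ?thesis by (simp only: vec_comb_image_vecs)
qed

lemma vec_comb_prodset_smul_set:
  "vec_comb ` prodset basis_idx (smul_set t (vecs O_K :: ('n::finite \<Rightarrow> 'k) set))
    = smul_set (f t) (vecs O_L)"
proof -
  let ?V = "vecs O_K :: ('n \<Rightarrow> 'k) set"
  have "prodset basis_idx (smul_set t ?V) = (\<lambda>X k i. t * X k i) ` prodset basis_idx ?V"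
    unfolding smul_set_eq_image
    by (rule prodset_image)
      (simp_all add: zero_fun_def vecs_def add_subgroup_zero[OF K.add_subgroup_ints])
  then have "vec_comb ` prodset basis_idx (smul_set t ?V)
      = (\<lambda>X. vec_comb (\<lambda>k i. t * X k i)) ` prodset basis_idx ?V"
    by (simp only: image_image)
  also have "\<dots> = (\<lambda>z i. f t * z i) ` vec_comb ` prodset basis_idx ?V"
    by (simp only: vec_comb_smul image_image)
  finally show ?thesis by (simp only: vec_comb_image_vecs smul_set_eq_image)
qed

lemma card_cosets_vec_comb:
  fixes N :: "('n::finite \<Rightarrow> 'k) set"
  assumes N: "add_subgroup N" "N \<subseteq> vecs O_K"
  shows "card (cosets (vecs O_L) (vec_comb ` prodset basis_idx N))
      = card (cosets (vecs O_K) N) ^ ext_degree f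
    \<and> (finite (cosets (vecs O_K) N)
      \<longrightarrow> finite (cosets (vecs O_L) (vec_comb ` prodset basis_idx N)))"
proof -
  let ?G = "prodset basis_idx (vecs O_K :: ('n \<Rightarrow> 'k) set)"
  have G: "add_subgroup ?G"
    by (rule add_subgroup_prodset[OF add_subgroup_vecs[OF K.add_subgroup_ints]])
  have NG: "prodset basis_idx N \<subseteq> ?G" by (rule prodset_mono[OF N(2)])
  have "card (cosets ?G (prodset basis_idx N))
      = card (cosets (vecs O_L) (vec_comb ` prodset basis_idx N))
    \<and> (finite (cosets ?G (prodset basis_idx N))
      \<longleftrightarrow> finite (cosets (vecs O_L) (vec_comb ` prodset basis_idx N)))"
  proof (rule card_cosets_iso[OF G add_subgroup_image[OF add_subgroup_prodset[OF N(1)]]])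
    show "vec_comb X \<in> vecs O_L" if "X \<in> ?G" for X
    proof -
      have "vec_comb X \<in> vec_comb ` ?G" using that by (rule imageI)
      then show ?thesis by (simp only: vec_comb_image_vecs)
    qed
    show "\<exists>g\<in>?G. h - vec_comb g \<in> vec_comb ` prodset basis_idx N" if "h \<in> vecs O_L" for h
    proof -
      have "h \<in> vec_comb ` ?G" using \<open>h \<in> vecs O_L\<close> by (simp only: vec_comb_image_vecs)
      then obtain X where X: "X \<in> ?G" "vec_comb X = h" by blast
      have "vec_comb 0 = 0" using vec_comb_diff[of 0 0] by simp
      then have "h - vec_comb X = vec_comb 0" using X(2) by simp
      moreover have "0 \<in> prodset basis_idx N"
        by (rule add_subgroup_zero[OF add_subgroup_prodset[OF N(1)]])
      ultimately show ?thesis using X(1) by blast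
    qed
    show "vec_comb X \<in> vec_comb ` prodset basis_idx N \<longleftrightarrow> X \<in> prodset basis_idx N"
      if X: "X \<in> ?G" for X
    proof
      assume "vec_comb X \<in> vec_comb ` prodset basis_idx N"
      then obtain Y where Y: "Y \<in> prodset basis_idx N" "vec_comb X = vec_comb Y" by blast
      then have "X = Y" using inj_onD[OF vec_comb_inj_on Y(2) X] NG by blast
      then show "X \<in> prodset basis_idx N" using Y(1) by simp
    qed simp
  qed (simp_all add: vec_comb_diff)
  then show ?thesis
    using card_cosets_prodset[OF N(1) finite_basis_idx, of "vecs O_K :: ('n \<Rightarrow> 'k) set"]
      card_basis_idx by simp
qed

lemma card_cok_mod_base_change:
  fixes T :: "'n::finite \<Rightarrow> 'n \<Rightarrow> 'k"
  assumes T: "\<forall>i j. T i j \<in> O_K" and t: "t \<in> O_K"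
  shows "card (cok_mod O_L (\<lambda>i j. f (T i j)) (f t)) = card (cok_mod O_K T t) ^ ext_degree f"
proof -
  let ?V = "vecs O_K :: ('n \<Rightarrow> 'k) set"
  let ?W = "sum_set (mat_vec T ` ?V) (smul_set t ?V)"
  have V: "add_subgroup ?V" by (rule add_subgroup_vecs[OF K.add_subgroup_ints])
  have T_image: "add_subgroup (mat_vec T ` ?V)"
    by (rule add_subgroup_mat_vec_image[OF K.add_subgroup_ints])
  have W: "add_subgroup ?W" by (rule add_subgroup_sum_set[OF T_image add_subgroup_smul_set[OF V]])
  have "?W \<subseteq> ?V" unfolding sum_set_eq
    using mat_vec_in_vecs[OF K.subring_ints T] smul_set_subset_vecs[OF K.subring_ints t]
    by (intro sums_subset[OF V]) auto
  moreover have "vec_comb ` prodset basis_idx ?W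
      = sum_set (mat_vec (\<lambda>i j. f (T i j)) ` vecs O_L) (smul_set (f t) (vecs O_L))"
    by (simp only: vec_comb_prodset_sum_set[OF add_subgroup_zero[OF T_image]
        add_subgroup_zero[OF add_subgroup_smul_set[OF V]]] vec_comb_prodset_mat_image
        vec_comb_prodset_smul_set)
  ultimately show ?thesis
    using card_cosets_vec_comb[OF W] unfolding cok_mod_def quot_eq_cosets by simp
qed

lemma base_change_matrix:
  fixes T :: "'n::finite \<Rightarrow> 'n \<Rightarrow> 'k"
  assumes T: "\<forall>i j. T i j \<in> O_K" and t: "t \<in> O_K" "t \<noteq> 0"
  shows "finite (ker_mod O_L (\<lambda>i j. f (T i j)) (f t))
    \<and> finite (cok_mod O_L (\<lambda>i j. f (T i j)) (f t))
    \<and> finite (ker_mod O_K T t) \<and> finite (cok_mod O_K T t)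
    \<and> card (ker_mod O_L (\<lambda>i j. f (T i j)) (f t)) = card (cok_mod O_L (\<lambda>i j. f (T i j)) (f t))
    \<and> card (cok_mod O_L (\<lambda>i j. f (T i j)) (f t)) = card (ker_mod O_K T t) ^ ext_degree f
    \<and> card (ker_mod O_K T t) = card (cok_mod O_K T t)"
proof -
  have ft: "f t \<in> O_L" "f t \<noteq> 0" using t f_mem_ints_iff field_emb_eq_0_iff[OF femb] by auto
  have TL: "\<forall>i j. f (T i j) \<in> O_L" using T f_mem_ints_iff by simp
  show ?thesis
    using card_ker_mod_eq_card_cok_mod[OF K.subring_ints T t(1)
        K.finite_cosets_smul_set_vecs[OF residue_K t]]
      card_ker_mod_eq_card_cok_mod[OF L.subring_ints TL ft(1)
        L.finite_cosets_smul_set_vecs[OF residue_L ft]]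
      card_cok_mod_base_change[OF T t(1)]
    by simp
qed

end

section \<open>The lattice cut out by an injective matrix over \<open>O_L\<close>\<close>

context local_extension
begin

definition descent_lattice :: "('n::finite \<Rightarrow> 'n \<Rightarrow> 'l) \<Rightarrow> ('n \<Rightarrow> 'k) set" where
  "descent_lattice U = {x \<in> vecs O_K. (\<lambda>i. f (x i)) \<in> mat_vec U ` vecs O_L}"

lemma descent_lattice_subset:
  fixes U :: "'n::finite \<Rightarrow> 'n \<Rightarrow> 'l"
  shows "descent_lattice U \<subseteq> vecs O_K"
  by (auto simp: descent_lattice_def)

lemma add_subgroup_descent_lattice:
  fixes U :: "'n::finite \<Rightarrow> 'n \<Rightarrow> 'l"
  shows "add_subgroup (descent_lattice U)"
  unfolding descent_lattice_def
  by (rule add_subgroup_preimage[OF add_subgroup_vecs[OF K.add_subgroup_ints]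
        add_subgroup_mat_vec_image[OF L.add_subgroup_ints]])
    (simp add: fun_eq_iff field_emb_diff[OF femb])

lemma smul_set_descent_lattice:
  fixes U :: "'n::finite \<Rightarrow> 'n \<Rightarrow> 'l"
  assumes t: "t \<in> O_K"
  shows "smul_set t (descent_lattice U) \<subseteq> descent_lattice U"
proof
  fix z assume "z \<in> smul_set t (descent_lattice U)"
  then obtain x v where z: "z = (\<lambda>i. t * x i)" and x: "x \<in> vecs O_K"
    and v: "v \<in> vecs O_L" "(\<lambda>i. f (x i)) = mat_vec U v"
    by (auto simp: smul_set_def descent_lattice_def)
  have "(\<lambda>i. f (z i)) = mat_vec U (\<lambda>i. f t * v i)"
    using v(2) by (simp add: z mat_vec_scale field_emb_mult[OF femb] fun_eq_iff)
  moreover have "(\<lambda>i. f t * v i) \<in> vecs O_L"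
    using v(1) t f_mem_ints_iff subring_mult[OF L.subring_ints] by (simp add: vecs_def)
  moreover have "z \<in> vecs O_K"
    using x t subring_mult[OF K.subring_ints] by (simp add: z vecs_def)
  ultimately show "z \<in> descent_lattice U" unfolding descent_lattice_def by blast
qed

lemma power_smul_vecs_subset_descent_lattice:
  fixes U :: "'n::finite \<Rightarrow> 'n \<Rightarrow> 'l"
  assumes inj: "inj_on (mat_vec U) (vecs O_L)"
  shows "\<exists>m. smul_set (p ^ m) (vecs O_K) \<subseteq> descent_lattice U"
proof -
  obtain m where m: "\<forall>z\<in>vecs O_L. (\<lambda>i. f p ^ m * z i) \<in> mat_vec U ` vecs O_L"
    using L.power_smul_vecs_in_image[OF inj av_f_p_less_1] by blast
  have "x \<in> descent_lattice U" if x: "x \<in> smul_set (p ^ m) (vecs O_K)" for x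
  proof -
    obtain y where y: "y \<in> vecs O_K" "x = (\<lambda>i. p ^ m * y i)"
      using x unfolding smul_set_def by blast
    have "(\<lambda>i. f (y i)) \<in> vecs O_L" using y(1) f_mem_ints_iff by (simp add: vecs_def)
    then have "(\<lambda>i. f (x i)) \<in> mat_vec U ` vecs O_L"
      using m y(2) by (simp add: field_emb_mult[OF femb] field_emb_power[OF femb])
    moreover have "x \<in> vecs O_K"
      using y smul_set_subset_vecs[OF K.subring_ints subring_power[OF K.subring_ints p_ints]]
      unfolding smul_set_def by blast
    ultimately show ?thesis unfolding descent_lattice_def by blast
  qed
  then show ?thesis by blast
qed

text \<open>Each \<open>U\<close>-preimage can be taken in \<open>O_L^n\<close>, and \<open>U O_L^n\<close> is closed under
  \<open>O_L\<close>-linear combinations.\<close>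
lemma vec_comb_descent_lattice:
  fixes U :: "'n::finite \<Rightarrow> 'n \<Rightarrow> 'l"
  shows "vec_comb ` prodset basis_idx (descent_lattice U) \<subseteq> mat_vec U ` vecs O_L"
proof clarify
  fix X assume X: "X \<in> prodset basis_idx (descent_lattice U)"
  have "\<forall>k\<in>basis_idx. \<exists>v. v \<in> vecs O_L \<and> (\<lambda>i. f (X k i)) = mat_vec U v"
    using prodset_memD(1)[OF X] by (auto simp: descent_lattice_def)
  then obtain V
    where V: "\<And>k. k \<in> basis_idx \<Longrightarrow> V k \<in> vecs O_L \<and> (\<lambda>i. f (X k i)) = mat_vec U (V k)"
    by metis
  define v where "v = (\<lambda>j. \<Sum>k\<in>basis_idx. basis_elt k * V k j)"
  have "v \<in> vecs O_L"
    unfolding v_def vecs_def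
  proof (intro CollectI allI add_subgroup_sum[OF L.add_subgroup_ints]
      subring_mult[OF L.subring_ints])
    fix j k assume "k \<in> basis_idx"
    then show "basis_elt k \<in> O_L" "V k j \<in> O_L"
      using basis_elt_ints V by (auto simp: vecs_def)
  qed
  moreover have "vec_comb X = mat_vec U v"
  proof
    fix i
    have "mat_vec U v i = (\<Sum>k\<in>basis_idx. \<Sum>j\<in>UNIV. U i j * (basis_elt k * V k j))"
      by (simp add: mat_vec_def v_def sum_distrib_left sum.swap[of _ UNIV])
    also have "\<dots> = (\<Sum>k\<in>basis_idx. basis_elt k * mat_vec U (V k) i)"
      by (simp add: mat_vec_def sum_distrib_left algebra_simps)
    also have "\<dots> = (\<Sum>k\<in>basis_idx. f (X k i) * basis_elt k)"
    proof (rule sum.cong[OF refl])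
      fix k assume "k \<in> basis_idx"
      then have "mat_vec U (V k) i = f (X k i)" using V by (metis)
      then show "basis_elt k * mat_vec U (V k) i = f (X k i) * basis_elt k" by simp
    qed
    finally show "vec_comb X i = mat_vec U v i" by (simp add: vec_comb_def basis_comb_def)
  qed
  ultimately show "vec_comb X \<in> mat_vec U ` vecs O_L" by blast
qed

lemma card_cok_mod_le_cok_incl_mod:
  fixes U :: "'n::finite \<Rightarrow> 'n \<Rightarrow> 'l"
  assumes U: "\<forall>i j. U i j \<in> O_L" and t: "t \<in> O_K"
    and fin: "finite (cok_incl_mod O_K (descent_lattice U) t)"
  shows "card (cok_mod O_L U (f t))
    \<le> card (cok_incl_mod O_K (descent_lattice U) t) ^ ext_degree f"
proof -
  let ?VK = "vecs O_K :: ('n \<Rightarrow> 'k) set" and ?VL = "vecs O_L :: ('n \<Rightarrow> 'l) set"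
  let ?N = "sum_set (descent_lattice U) (smul_set t ?VK)"
  let ?W = "sum_set (mat_vec U ` ?VL) (smul_set (f t) ?VL)"
  have VK: "add_subgroup ?VK" by (rule add_subgroup_vecs[OF K.add_subgroup_ints])
  have VL: "add_subgroup ?VL" by (rule add_subgroup_vecs[OF L.add_subgroup_ints])
  have N: "add_subgroup ?N"
    by (rule add_subgroup_sum_set[OF add_subgroup_descent_lattice add_subgroup_smul_set[OF VK]])
  have N_VK: "?N \<subseteq> ?VK" unfolding sum_set_eq
    by (rule sums_subset[OF VK descent_lattice_subset smul_set_subset_vecs[OF K.subring_ints t]])
  have W: "add_subgroup ?W"
    by (rule add_subgroup_sum_set[OF add_subgroup_mat_vec_image[OF L.add_subgroup_ints]
          add_subgroup_smul_set[OF VL]])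
  have W_VL: "?W \<subseteq> ?VL" unfolding sum_set_eq
    by (rule sums_subset[OF VL _ smul_set_subset_vecs[OF L.subring_ints]])
      (use mat_vec_in_vecs[OF L.subring_ints U] t f_mem_ints_iff in auto)
  have "vec_comb ` prodset basis_idx ?N
      = sum_set (vec_comb ` prodset basis_idx (descent_lattice U)) (smul_set (f t) ?VL)"
    by (simp only: vec_comb_prodset_sum_set[OF add_subgroup_zero[OF add_subgroup_descent_lattice]
        add_subgroup_zero[OF add_subgroup_smul_set[OF VK]]] vec_comb_prodset_smul_set)
  moreover have "vec_comb ` prodset basis_idx (descent_lattice U) \<subseteq> mat_vec U ` ?VL"
    by (rule vec_comb_descent_lattice)
  ultimately have NW: "vec_comb ` prodset basis_idx ?N \<subseteq> ?W" unfolding sum_set_eq by blast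
  have count: "card (cosets ?VL (vec_comb ` prodset basis_idx ?N))
      = card (cosets ?VK ?N) ^ ext_degree f
    \<and> finite (cosets ?VL (vec_comb ` prodset basis_idx ?N))"
    using card_cosets_vec_comb[OF N N_VK] fin unfolding cok_incl_mod_def quot_eq_cosets by simp
  have "add_subgroup (vec_comb ` prodset basis_idx ?N)"
    by (rule add_subgroup_image[OF add_subgroup_prodset[OF N]]) (rule vec_comb_diff)
  then have "card (cosets ?VL ?W) \<le> card (cosets ?VL (vec_comb ` prodset basis_idx ?N))"
    using card_cosets_antimono[OF _ NW W W_VL VL] count by blast
  then show ?thesis using count unfolding cok_mod_def cok_incl_mod_def quot_eq_cosets by simp
qed

text \<open>Injectivity of \<open>U\<close> is needed only to make the quotients of \<open>O_K^n\<close> by the lattice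
  finite.\<close>
lemma base_change_lattice:
  fixes U :: "'n::finite \<Rightarrow> 'n \<Rightarrow> 'l"
  assumes U: "\<forall>i j. U i j \<in> O_L" and inj: "inj_on (mat_vec U) (vecs O_L)"
    and t: "t \<in> O_K" "t \<noteq> 0"
  shows "finite (ker_mod O_L U (f t)) \<and> finite (cok_mod O_L U (f t))
    \<and> finite (ker_incl_mod O_K (descent_lattice U) t)
    \<and> finite (cok_incl_mod O_K (descent_lattice U) t)
    \<and> card (ker_mod O_L U (f t)) = card (cok_mod O_L U (f t))
    \<and> card (cok_mod O_L U (f t)) \<le> card (ker_incl_mod O_K (descent_lattice U) t) ^ ext_degree f
    \<and> card (ker_incl_mod O_K (descent_lattice U) t)
      = card (cok_incl_mod O_K (descent_lattice U) t)"
proof -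
  let ?VK = "vecs O_K :: ('n \<Rightarrow> 'k) set" and ?Lam = "descent_lattice U"
  have VK: "add_subgroup ?VK" by (rule add_subgroup_vecs[OF K.add_subgroup_ints])
  have ft: "f t \<in> O_L" "f t \<noteq> 0" using t f_mem_ints_iff field_emb_eq_0_iff[OF femb] by auto
  obtain m where m: "smul_set (p ^ m) ?VK \<subseteq> ?Lam"
    using power_smul_vecs_subset_descent_lattice[OF inj] by blast
  have pm: "p ^ m \<in> O_K" "p ^ m \<noteq> 0" using subring_power[OF K.subring_ints p_ints] p_nonzero by auto
  have "finite (cosets ?VK ?Lam)"
    using card_cosets_antimono[OF add_subgroup_smul_set[OF VK] m add_subgroup_descent_lattice
        descent_lattice_subset VK K.finite_cosets_smul_set_vecs[OF residue_K pm]] by blast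
  then have "finite (ker_incl_mod O_K ?Lam t) \<and> finite (cok_incl_mod O_K ?Lam t)
      \<and> card (ker_incl_mod O_K ?Lam t) = card (cok_incl_mod O_K ?Lam t)"
    by (rule card_ker_incl_mod_eq_card_cok_incl_mod[OF K.subring_ints t add_subgroup_descent_lattice
        descent_lattice_subset smul_set_descent_lattice[OF t(1)] _
        K.finite_cosets_smul_set_vecs[OF residue_K t]])
  then show ?thesis
    using card_ker_mod_eq_card_cok_mod[OF L.subring_ints U ft(1)
        L.finite_cosets_smul_set_vecs[OF residue_L ft]]
      card_cok_mod_le_cok_incl_mod[OF U t(1)]
    by simp
qed

end

context discrete_abs_value
begin

lemma av_uniformizer: "uniformizer av p \<Longrightarrow> av p = c"
proof -
  assume "uniformizer av p"
  then have p: "p \<in> ints av" and max: "max_ideal av = {p * y |y. y \<in> ints av}"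
    by (simp_all add: uniformizer_def)
  obtain \<pi> where \<pi>: "av \<pi> = c" using ex_uniformizer by blast
  then have "\<pi> \<in> max_ideal av" using c_less_1 by (simp add: max_ideal_def)
  then obtain y where y: "y \<in> ints av" "\<pi> = p * y" using max by blast
  then have "c = av p * av y" "av y \<le> 1" using \<pi> by (simp_all add: av_mult mem_ints_iff)
  then have "c \<le> av p" using mult_left_le[of "av y" "av p"] av_nonneg[of p] by simp
  moreover have "p * 1 \<in> max_ideal av" using max subring_1[OF subring_ints] by blast
  then have "av p \<le> c" using av_less_1_imp_le_c by (simp add: max_ideal_def)
  ultimately show ?thesis by simp
qed

end

lemma local_field_ext_imp_local_extension:
  assumes ext: "local_field_ext avK avL f" and unif: "uniformizer avK p"
  shows "\<exists>cK cL s. local_extension avK cK avL cL f p s"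
proof -
  have K: "nonarch_local_field avK" and L: "nonarch_local_field avL" and fext: "finite_ext f"
    and "\<exists>s>0. \<forall>a. avL (f a) = avK a powr s"
    using ext by (simp_all add: local_field_ext_def)
  then obtain s where s: "0 < s" "\<And>a. avL (f a) = avK a powr s" by blast
  obtain cK where "discrete_abs_value avK cK"
    using K by (auto simp: nonarch_local_field_def discrete_abs_def discrete_abs_value_def)
  moreover obtain cL where "discrete_abs_value avL cL"
    using L by (auto simp: nonarch_local_field_def discrete_abs_def discrete_abs_value_def)
  moreover have "avK p = cK" if "discrete_abs_value avK cK" for cK
    using discrete_abs_value.av_uniformizer[OF that unif] .
  ultimately show ?thesis
    using K L fext s
    by (metis local_extension.intro local_extension_axioms.intro nonarch_local_field_def)
qed

theorem lemma7p2:
  fixes avK :: "'k::field \<Rightarrow> real" and avL :: "'l::field \<Rightarrow> real"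
    and f :: "'k \<Rightarrow> 'l" and p :: 'k and r :: nat
  assumes ext: "local_field_ext avK avL f"
    and unif: "uniformizer avK p"
  shows
    "(\<forall>T :: 'n::finite \<Rightarrow> 'n \<Rightarrow> 'k.
        (\<forall>i j. T i j \<in> ints avK) \<longrightarrow> inj_on (mat_vec T) (vecs (ints avK)) \<longrightarrow>
        (let TL = (\<lambda>i j. f (T i j)) in
          finite (ker_mod (ints avL) TL (f p ^ r)) \<and> finite (cok_mod (ints avL) TL (f p ^ r)) \<and>
          finite (ker_mod (ints avK) T (p ^ r)) \<and> finite (cok_mod (ints avK) T (p ^ r)) \<and>
          card (ker_mod (ints avL) TL (f p ^ r)) = card (cok_mod (ints avL) TL (f p ^ r)) \<and>
          card (cok_mod (ints avL) TL (f p ^ r)) = card (ker_mod (ints avK) T (p ^ r)) ^ ext_degree f \<and>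
          card (ker_mod (ints avK) T (p ^ r)) ^ ext_degree f = card (cok_mod (ints avK) T (p ^ r)) ^ ext_degree f))
     \<and>
     (\<forall>U :: 'n::finite \<Rightarrow> 'n \<Rightarrow> 'l.
        (\<forall>i j. U i j \<in> ints avL) \<longrightarrow> inj_on (mat_vec U) (vecs (ints avL)) \<longrightarrow>
        (let Lam = {x \<in> vecs (ints avK). (\<lambda>i. f (x i)) \<in> mat_vec U ` vecs (ints avL)} in
          finite (ker_mod (ints avL) U (f p ^ r)) \<and> finite (cok_mod (ints avL) U (f p ^ r)) \<and>
          finite (ker_incl_mod (ints avK) Lam (p ^ r)) \<and> finite (cok_incl_mod (ints avK) Lam (p ^ r)) \<and>
          card (ker_mod (ints avL) U (f p ^ r)) = card (cok_mod (ints avL) U (f p ^ r)) \<and>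
          card (cok_mod (ints avL) U (f p ^ r)) \<le> card (ker_incl_mod (ints avK) Lam (p ^ r)) ^ ext_degree f \<and>
          card (ker_incl_mod (ints avK) Lam (p ^ r)) ^ ext_degree f = card (cok_incl_mod (ints avK) Lam (p ^ r)) ^ ext_degree f))"
proof -
  obtain cK cL s where "local_extension avK cK avL cL f p s"
    using local_field_ext_imp_local_extension[OF ext unif] by blast
  then interpret local_extension avK cK avL cL f p s .
  have t: "p ^ r \<in> ints avK" "p ^ r \<noteq> 0"
    using subring_power[OF K.subring_ints p_ints] p_nonzero by simp_all
  note matrix = base_change_matrix[OF _ t, unfolded field_emb_power[OF femb]]
  note lattice =
    base_change_lattice[OF _ _ t, unfolded field_emb_power[OF femb] descent_lattice_def]
  show ?thesis
    unfolding Let_def by (intro conjI allI impI) (auto dest!: matrix lattice)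
qed

end
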